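(* Let $\mathcal S=\{s_1,\dots,s_n,(p_1,l_1),\dots,(p_m,l_m)\}$ be a configuration and let $J\subseteq J_{\mathcal S}$ be a linear subspace such that (1) $\mathcal Z(J)=\{s_1,\dots,s_n,p_1,\dots,p_m\}$; (2) for every $i$, the linear space $\{\nabla q(s_i): q\in J\}\subseteq\mathbb R^3$ has dimension $2$ (i.e. $G_J(s_i)$ is a projective line); (3) for every $j$, there is $q\in J$ with $\nabla q(p_j)\neq 0$; (4) for every $j$, $\mathcal Z(E_J(p_j))\cap l_j=\{p_j\}$, where $E_J(p)=\{q\in J:\operatorname{ord}_p(q)\ge2\}$. Then $\operatorname{span}(F_{\mathcal S})=I_{\mathcal S}$, and for any basis $q_1,\dots,q_k$ of $J$ the form $q_1^2+\dots+q_k^2$ is an inner form of $F_{\mathcal S}$.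
   Context: Notation. $H_k\subseteq\mathbb R[x,y,z]$ is the real vector space of ternary forms of degree $k$. For $I\subseteq H_k$, $\mathcal Z(I)=\{a\in\mathbb P^2(\mathbb R): f(a)=0\ \forall f\in I\}$. $P_{3,4}=\{f\in H_4: f\ge0\text{ on }\mathbb P^2(\mathbb R)\}$. A face of $P_{3,4}$ is a convex subcone $F$ such that $a,b\in P_{3,4}$, $a+b\in F$ imply $a,b\in F$. For $f\in P_{3,4}$, $F_f=\{g\in P_{3,4}: f-\epsilon g\in P_{3,4}$ for some $\epsilon>0\}$; $f$ is an inner form of the face $F$ if $F_f=F$. $J_F=\{q\in H_2:q^2\in F\}$. For $p\in\mathbb P^2(\mathbb R)$ and $q$ a form, $\operatorname{ord}_p(q)$ is its order of vanishing at $p$ (least degree of a nonzero homogeneous component in affine coordinates centered at $p$). Local notation. For $p\in\mathbb P^2(\mathbb R)$, affine coordinates centered at $p$ are obtained by an invertible real linear change of coordinates sending $p$ to $(0:0:1)$ and setting $z=1$; $f\in H_4$ becomes $f(x,y)=\sum a_{ij}x^iy^j=f_0+\dots+f_4$. For $\operatorname{ord}_pf\ge2$ and a real line $l\ni p$ with coordinates chosen so $l=\{y=0\}$, $\tilde f(x,y)=f(x,xy)/x^2$. Sets. $F_s=\{f\in P_{3,4}: f(s)=0\}$, $I_s=\{f\in H_4:\operatorname{ord}_sf\ge2\}$; $F_{(p,l)}=\{f\in P_{3,4}: f(p)=0,\ \tilde f(0,0)=0\}$ and $I_{(p,l)}=\{f\in H_4: a_{00}=a_{10}=a_{01}=a_{20}=a_{11}=a_{30}=0\}$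 (coordinates centered at $p$, $l=\{y=0\}$). A configuration is $\mathcal S=\{s_1,\dots,s_n,(p_1,l_1),\dots,(p_m,l_m)\}$ with $s_1,\dots,s_n,p_1,\dots,p_m\in\mathbb P^2(\mathbb R)$ pairwise distinct and $l_j$ real lines with $p_j\in l_j$; $F_{\mathcal S}=\bigcap_iF_{s_i}\cap\bigcap_jF_{(p_j,l_j)}$, $I_{\mathcal S}=\bigcap_iI_{s_i}\cap\bigcap_jI_{(p_j,l_j)}$, $J_{\mathcal S}=J_{F_{\mathcal S}}$. *)

theory Defs
  imports "HOL-Analysis.Analysis"
begin

(* Points of P^2(R) are represented by nonzero vectors of R^3, up to nonzero scaling.  A real line l is represented
   by a nonzero normal vector nv, l = {a. nv \<bullet> a = 0}. *)

definition proj_eq :: "real^3 \<Rightarrow> real^3 \<Rightarrow> bool" where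
  "proj_eq a b \<longleftrightarrow> (\<exists>t. t \<noteq> 0 \<and> a = t *\<^sub>R b)"

definition monoms :: "nat \<Rightarrow> (nat \<Rightarrow> nat \<Rightarrow> real) \<Rightarrow> real^3 \<Rightarrow> real" where
  "monoms k c v = (\<Sum>i\<le>k. \<Sum>j\<le>k - i. c i j * (v$1)^i * (v$2)^j * (v$3)^(k - i - j))"

definition H :: "nat \<Rightarrow> (real^3 \<Rightarrow> real) set" where
  "H k = {f. \<exists>c. f = monoms k c}"

definition fsubspace :: "(real^3 \<Rightarrow> real) set \<Rightarrow> bool" where
  "fsubspace S \<longleftrightarrow> (\<lambda>v. 0) \<in> S \<and> (\<forall>f\<in>S. \<forall>g\<in>S. (\<lambda>v. f v + g v) \<in> S)
      \<and> (\<forall>f\<in>S. \<forall>t::real. (\<lambda>v. t * f v) \<in> S)"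

definition fspan :: "(real^3 \<Rightarrow> real) set \<Rightarrow> (real^3 \<Rightarrow> real) set" where
  "fspan S = {g. \<exists>k (c::nat \<Rightarrow> real) gs. (\<forall>i<k. gs i \<in> S) \<and> g = (\<lambda>v. \<Sum>i<k. c i * gs i v)}"

definition fbasis :: "(real^3 \<Rightarrow> real) set \<Rightarrow> nat \<Rightarrow> (nat \<Rightarrow> real^3 \<Rightarrow> real) \<Rightarrow> bool" where
  "fbasis S k qs \<longleftrightarrow> (\<forall>i<k. qs i \<in> S)
     \<and> (\<forall>c. (\<forall>v. (\<Sum>i<k. c i * qs i v) = 0) \<longrightarrow> (\<forall>i<k. c i = 0))
     \<and> S = {g. \<exists>c. g = (\<lambda>v. \<Sum>i<k. c i * qs i v)}"

definition Zset :: "(real^3 \<Rightarrow> real) set \<Rightarrow> (real^3) set" where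
  "Zset I = {a. a \<noteq> 0 \<and> (\<forall>f\<in>I. f a = 0)}"

definition P34 :: "(real^3 \<Rightarrow> real) set" where
  "P34 = {f \<in> H 4. \<forall>v. f v \<ge> 0}"

definition Fof :: "(real^3 \<Rightarrow> real) \<Rightarrow> (real^3 \<Rightarrow> real) set" where
  "Fof f = {g \<in> P34. \<exists>\<epsilon>>0. (\<lambda>v. f v - \<epsilon> * g v) \<in> P34}"

definition inner_form :: "(real^3 \<Rightarrow> real) \<Rightarrow> (real^3 \<Rightarrow> real) set \<Rightarrow> bool" where
  "inner_form f F \<longleftrightarrow> f \<in> P34 \<and> Fof f = F"

definition JF :: "(real^3 \<Rightarrow> real) set \<Rightarrow> (real^3 \<Rightarrow> real) set" where
  "JF F = {q \<in> H 2. (\<lambda>v. (q v)^2) \<in> F}"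

definition grad :: "(real^3 \<Rightarrow> real) \<Rightarrow> real^3 \<Rightarrow> real^3" where
  "grad q a = (\<chi> i. frechet_derivative q (at a) (axis i 1))"

(* affine coordinates centered at p: invertible linear change sending p to (0:0:1) *)
definition chart :: "real^3 \<Rightarrow> real^3^3 \<Rightarrow> bool" where
  "chart p A \<longleftrightarrow> invertible A \<and> proj_eq (A *v axis 3 1) p"

(* additionally the line {nv . a = 0} becomes {y = 0} *)
definition chart_line :: "real^3 \<Rightarrow> real^3 \<Rightarrow> real^3^3 \<Rightarrow> bool" where
  "chart_line p nv A \<longleftrightarrow> chart p A \<and> proj_eq (transpose A *v nv) (axis 2 1)"

(* c are the coefficients a_ij of f in the affine coordinates given by A (z = 1) *)
definition local_rep :: "nat \<Rightarrow> (real^3 \<Rightarrow> real) \<Rightarrow> real^3^3 \<Rightarrow> (nat \<Rightarrow> nat \<Rightarrow> real) \<Rightarrow> bool" where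
  "local_rep k f A c \<longleftrightarrow>
     (\<forall>x y. f (A *v vector [x, y, 1]) = (\<Sum>i\<le>k. \<Sum>j\<le>k - i. c i j * x^i * y^j))"

definition ord_ge2 :: "nat \<Rightarrow> real^3 \<Rightarrow> (real^3 \<Rightarrow> real) \<Rightarrow> bool" where
  "ord_ge2 k p f \<longleftrightarrow> (\<exists>A c. chart p A \<and> local_rep k f A c \<and> c 0 0 = 0 \<and> c 1 0 = 0 \<and> c 0 1 = 0)"

definition Fpt :: "real^3 \<Rightarrow> (real^3 \<Rightarrow> real) set" where
  "Fpt s = {f \<in> P34. f s = 0}"

definition Ipt :: "real^3 \<Rightarrow> (real^3 \<Rightarrow> real) set" where
  "Ipt s = {f \<in> H 4. ord_ge2 4 s f}"

definition Fpl :: "real^3 \<Rightarrow> real^3 \<Rightarrow> (real^3 \<Rightarrow> real) set" where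
  "Fpl p nv = {f \<in> P34. f p = 0 \<and> (\<exists>A c. chart_line p nv A \<and> local_rep 4 f A c \<and> c 2 0 = 0)}"

definition Ipl :: "real^3 \<Rightarrow> real^3 \<Rightarrow> (real^3 \<Rightarrow> real) set" where
  "Ipl p nv = {f \<in> H 4. \<exists>A c. chart_line p nv A \<and> local_rep 4 f A c \<and>
      c 0 0 = 0 \<and> c 1 0 = 0 \<and> c 0 1 = 0 \<and> c 2 0 = 0 \<and> c 1 1 = 0 \<and> c 3 0 = 0}"

definition FS :: "nat \<Rightarrow> (nat \<Rightarrow> real^3) \<Rightarrow> nat \<Rightarrow> (nat \<Rightarrow> real^3) \<Rightarrow> (nat \<Rightarrow> real^3) \<Rightarrow> (real^3 \<Rightarrow> real) set" where
  "FS n s m p l = P34 \<inter> (\<Inter>i\<in>{..<n}. Fpt (s i)) \<inter> (\<Inter>j\<in>{..<m}. Fpl (p j) (l j))"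

definition IS :: "nat \<Rightarrow> (nat \<Rightarrow> real^3) \<Rightarrow> nat \<Rightarrow> (nat \<Rightarrow> real^3) \<Rightarrow> (nat \<Rightarrow> real^3) \<Rightarrow> (real^3 \<Rightarrow> real) set" where
  "IS n s m p l = H 4 \<inter> (\<Inter>i\<in>{..<n}. Ipt (s i)) \<inter> (\<Inter>j\<in>{..<m}. Ipl (p j) (l j))"

definition configuration :: "nat \<Rightarrow> (nat \<Rightarrow> real^3) \<Rightarrow> nat \<Rightarrow> (nat \<Rightarrow> real^3) \<Rightarrow> (nat \<Rightarrow> real^3) \<Rightarrow> bool" where
  "configuration n s m p l \<longleftrightarrow>
     (\<forall>i<n. s i \<noteq> 0) \<and> (\<forall>j<m. p j \<noteq> 0 \<and> l j \<noteq> 0 \<and> l j \<bullet> p j = 0)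
     \<and> (\<forall>i<n. \<forall>i'<n. i \<noteq> i' \<longrightarrow> \<not> proj_eq (s i) (s i'))
     \<and> (\<forall>j<m. \<forall>j'<m. j \<noteq> j' \<longrightarrow> \<not> proj_eq (p j) (p j'))
     \<and> (\<forall>i<n. \<forall>j<m. \<not> proj_eq (s i) (p j))"

definition EJ :: "(real^3 \<Rightarrow> real) set \<Rightarrow> real^3 \<Rightarrow> (real^3 \<Rightarrow> real) set" where
  "EJ J p = {q \<in> J. ord_ge2 2 p q}"

end

theory Submission
  imports Defs "HOL-Computational_Algebra.Polynomial"
begin

text \<open>
  Let \<open>f\<close> be a sum of squares of a basis of \<open>J\<close>. The hypotheses say that \<open>f\<close> vanishes
  exactly on the configuration and that, in affine coordinates, it grows at least like
  \<open>x\<^sup>2 + y\<^sup>2\<close> at each \<open>s\<^sub>i\<close> (two independent gradients) and like \<open>y\<^sup>2 + x\<^sup>4\<close> at each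
  \<open>p\<^sub>j\<close> (a gradient transversal to \<open>l\<^sub>j\<close>, and an element of \<open>E\<^sub>J(p\<^sub>j)\<close> not vanishing
  on \<open>l\<^sub>j\<close> away from \<open>p\<^sub>j\<close>). The monomials allowed in \<open>I\<^sub>S\<close> are bounded by exactly these
  weights, so by compactness of the sphere every \<open>h \<in> I\<^sub>S\<close> satisfies \<open>\<bar>h\<bar> \<le> C f\<close>.
  Conversely, a nonnegative quartic vanishing on the configuration has the coefficients
  of \<open>I\<^sub>S\<close> equal to zero in every chart, so \<open>F\<^sub>S \<subseteq> I\<^sub>S\<close>. Then \<open>h = (h + C f) - C f\<close> spans
  \<open>I\<^sub>S\<close> by \<open>F\<^sub>S\<close>, and the domination of all of \<open>F\<^sub>S\<close> by \<open>f\<close> makes \<open>f\<close> an inner form.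
\<close>

lemma sum_triangle_delta: "i + j \<le> (k::nat) \<Longrightarrow> (\<Sum>a\<le>k. \<Sum>b\<le>k - a. (if a = i \<and> b = j then T a b else (0::real))) = T i j"
proof -
  assume a: "i + j \<le> k"
  have "(\<Sum>a\<le>k. \<Sum>b\<le>k - a. (if a = i \<and> b = j then T a b else (0::real))) = (\<Sum>a\<le>k. if a = i then (\<Sum>b\<le>k - a. if b = j then T a b else 0) else 0)"
    by (intro sum.cong refl) auto
  also have "\<dots> = (\<Sum>a\<le>k. if a = i then T i j else 0)"
  proof (intro sum.cong refl)
    fix x assume "x \<in> {..k}"
    have "j \<le> k - i" using a by arith
    thus "(if x = i then \<Sum>b\<le>k - x. if b = j then T x b else 0 else 0) = (if x = i then T i j else 0)"
      by simp
  qed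
  also have "\<dots> = T i j" using a by (simp add: sum.delta)
  finally show ?thesis .
qed

lemma H_monomial: "i + j \<le> k \<Longrightarrow> (\<lambda>v::real^3. t * v$1^i * v$2^j * v$3^(k-i-j)) \<in> H k"
proof -
  assume a: "i + j \<le> k"
  have "monoms k (\<lambda>a b. if a = i \<and> b = j then t else 0) v = t * v$1^i * v$2^j * v$3^(k-i-j)" for v
  proof -
    have "monoms k (\<lambda>a b. if a = i \<and> b = j then t else 0) v
        = (\<Sum>a\<le>k. \<Sum>b\<le>k - a. (if a = i \<and> b = j then t * v$1^a * v$2^b * v$3^(k-a-b) else 0))"
      unfolding monoms_def by (intro sum.cong refl) auto
    also have "\<dots> = t * v$1^i * v$2^j * v$3^(k-i-j)" using a by (rule sum_triangle_delta)
    finally show ?thesis .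
  qed
  thus ?thesis unfolding H_def by (intro CollectI exI[of _ "\<lambda>a b. if a = i \<and> b = j then t else 0"]) auto
qed

lemma H_zero: "(\<lambda>v. 0) \<in> H k"
  unfolding H_def monoms_def by (intro CollectI exI[of _ "\<lambda>a b. 0"]) auto

lemma H_add: assumes "f \<in> H k" "g \<in> H k" shows "(\<lambda>v. f v + g v) \<in> H k"
proof -
  obtain c d where "f = monoms k c" "g = monoms k d" using assms by (auto simp: H_def)
  thus ?thesis unfolding H_def monoms_def
    by (auto intro!: exI[of _ "\<lambda>a b. c a b + d a b"] simp: sum.distrib algebra_simps)
qed

lemma H_scale: assumes "f \<in> H k" shows "(\<lambda>v. t * f v) \<in> H k"
proof -
  obtain c where "f = monoms k c" using assms by (auto simp: H_def)
  thus ?thesis unfolding H_def monoms_def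
    by (auto intro!: exI[of _ "\<lambda>a b. t * c a b"] simp: sum_distrib_left algebra_simps)
qed

lemma H_sum: "finite A \<Longrightarrow> (\<And>a. a \<in> A \<Longrightarrow> F a \<in> H k) \<Longrightarrow> (\<lambda>v. \<Sum>a\<in>A. F a v) \<in> H k"
proof (induction A rule: finite_induct)
  case empty thus ?case using H_zero by simp
next
  case (insert x A) thus ?case using H_add[of "F x" k "\<lambda>v. \<Sum>a\<in>A. F a v"] by simp
qed

lemma H_mult: assumes "f \<in> H a" "g \<in> H b" shows "(\<lambda>v. f v * g v) \<in> H (a+b)"
proof -
  obtain c d where f: "f = monoms a c" and g: "g = monoms b d" using assms by (auto simp: H_def)
  have eq: "(\<lambda>v. f v * g v) = (\<lambda>v. \<Sum>i\<le>a. \<Sum>j\<le>a-i. \<Sum>i'\<le>b. \<Sum>j'\<le>b-i'.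
     (c i j * d i' j') * v$1^(i+i') * v$2^(j+j') * v$3^((a+b)-(i+i')-(j+j')))"
  proof
    fix v :: "real^3"
    have "f v * g v = (\<Sum>i\<le>a. \<Sum>j\<le>a-i. \<Sum>i'\<le>b. \<Sum>j'\<le>b-i'.
      (c i j * v$1^i * v$2^j * v$3^(a-i-j)) * (d i' j' * v$1^i' * v$2^j' * v$3^(b-i'-j')))"
      unfolding f g monoms_def sum_distrib_right unfolding sum_distrib_left ..
    also have "\<dots> = (\<Sum>i\<le>a. \<Sum>j\<le>a-i. \<Sum>i'\<le>b. \<Sum>j'\<le>b-i'.
     (c i j * d i' j') * v$1^(i+i') * v$2^(j+j') * v$3^((a+b)-(i+i')-(j+j')))"
    proof (intro sum.cong refl)
      fix i j i' j' assume "i \<in> {..a}" "j \<in> {..a-i}" "i' \<in> {..b}" "j' \<in> {..b-i'}"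
      hence e: "(a+b)-(i+i')-(j+j') = (a-i-j) + (b-i'-j')" by auto
      show "(c i j * v$1^i * v$2^j * v$3^(a-i-j)) * (d i' j' * v$1^i' * v$2^j' * v$3^(b-i'-j')) =
         (c i j * d i' j') * v$1^(i+i') * v$2^(j+j') * v$3^((a+b)-(i+i')-(j+j'))"
        unfolding e by (simp add: power_add algebra_simps)
    qed
    finally show "f v * g v = \<dots>" .
  qed
  show ?thesis unfolding eq
    by (intro H_sum H_monomial) auto
qed

lemma H_homogeneous: assumes "f \<in> H k" shows "f (t *\<^sub>R v) = t^k * f v"
proof -
  obtain c where f: "f = monoms k c" using assms by (auto simp: H_def)
  have "f (t *\<^sub>R v) = (\<Sum>i\<le>k. \<Sum>j\<le>k-i. t^k * (c i j * v$1^i * v$2^j * v$3^(k-i-j)))"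
    unfolding f monoms_def
  proof (intro sum.cong refl)
    fix i j assume "i \<in> {..k}" "j \<in> {..k-i}"
    hence e: "k = i + j + (k-i-j)" by auto
    show "c i j * (t *\<^sub>R v)$1^i * (t *\<^sub>R v)$2^j * (t *\<^sub>R v)$3^(k-i-j) = t^k * (c i j * v$1^i * v$2^j * v$3^(k-i-j))"
      by (subst (2) e) (simp add: power_add power_mult_distrib algebra_simps)
  qed
  also have "\<dots> = t^k * f v" unfolding f monoms_def by (simp add: sum_distrib_left)
  finally show ?thesis .
qed

lemma continuous_on_H: assumes "f \<in> H k" shows "continuous_on UNIV f"
proof -
  obtain c where f: "f = monoms k c" using assms by (auto simp: H_def)
  show ?thesis unfolding f monoms_def by (intro continuous_intros)
qed

lemma monoms_2_expand: "monoms 2 c v = c 0 0 * v$3^2 + c 0 1 * v$2 * v$3 + c 0 2 * v$2^2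
   + c 1 0 * v$1 * v$3 + c 1 1 * v$1 * v$2 + c 2 0 * v$1^2"
  by (simp add: monoms_def numeral_2_eq_2 atMost_Suc algebra_simps)

section \<open>Local representations in affine charts\<close>

definition bipoly :: "nat \<Rightarrow> (real \<Rightarrow> real \<Rightarrow> real) set" where
  "bipoly k = {\<phi>. \<exists>c. \<forall>x y. \<phi> x y = (\<Sum>i\<le>k. \<Sum>j\<le>k - i. c i j * x^i * y^j)}"

lemma bipoly_monomial: "i + j \<le> k \<Longrightarrow> (\<lambda>x y. t * x^i * y^j) \<in> bipoly k"
proof -
  assume a: "i + j \<le> k"
  have "(\<Sum>a\<le>k. \<Sum>b\<le>k - a. (if a = i \<and> b = j then t else 0) * x^a * y^b) = t * x^i * y^j" for x y
  proof -
    have "(\<Sum>a\<le>k. \<Sum>b\<le>k - a. (if a = i \<and> b = j then t else 0) * x^a * y^b)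
        = (\<Sum>a\<le>k. \<Sum>b\<le>k - a. (if a = i \<and> b = j then t * x^a * y^b else 0))"
      by (intro sum.cong refl) auto
    also have "\<dots> = t * x^i * y^j" using a by (rule sum_triangle_delta)
    finally show ?thesis .
  qed
  thus ?thesis unfolding bipoly_def by (intro CollectI exI[of _ "\<lambda>a b. if a = i \<and> b = j then t else 0"]) auto
qed

lemma bipoly_zero: "(\<lambda>x y. 0) \<in> bipoly k"
  unfolding bipoly_def by (intro CollectI exI[of _ "\<lambda>a b. 0"]) auto

lemma bipoly_add: assumes "f \<in> bipoly k" "g \<in> bipoly k" shows "(\<lambda>x y. f x y + g x y) \<in> bipoly k"
proof -
  obtain c d where "\<forall>x y. f x y = (\<Sum>i\<le>k. \<Sum>j\<le>k - i. c i j * x^i * y^j)" "\<forall>x y. g x y = (\<Sum>i\<le>k. \<Sum>j\<le>k - i. d i j * x^i * y^j)"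
    using assms unfolding bipoly_def by blast
  thus ?thesis unfolding bipoly_def
    by (auto intro!: exI[of _ "\<lambda>a b. c a b + d a b"] simp: sum.distrib algebra_simps)
qed

lemma bipoly_scale: assumes "f \<in> bipoly k" shows "(\<lambda>x y. t * f x y) \<in> bipoly k"
proof -
  obtain c where "\<forall>x y. f x y = (\<Sum>i\<le>k. \<Sum>j\<le>k - i. c i j * x^i * y^j)"
    using assms unfolding bipoly_def by blast
  thus ?thesis unfolding bipoly_def
    by (auto intro!: exI[of _ "\<lambda>a b. t * c a b"] simp: sum_distrib_left algebra_simps)
qed

lemma bipoly_sum: "finite A \<Longrightarrow> (\<And>a. a \<in> A \<Longrightarrow> F a \<in> bipoly k) \<Longrightarrow> (\<lambda>x y. \<Sum>a\<in>A. F a x y) \<in> bipoly k"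
proof (induction A rule: finite_induct)
  case empty thus ?case using bipoly_zero by simp
next
  case (insert x A) thus ?case using bipoly_add[of "F x" k "\<lambda>x y. \<Sum>a\<in>A. F a x y"] by simp
qed

lemma bipoly_mult: assumes "f \<in> bipoly a" "g \<in> bipoly b" shows "(\<lambda>x y. f x y * g x y) \<in> bipoly (a+b)"
proof -
  obtain c where c: "\<And>x y. f x y = (\<Sum>i\<le>a. \<Sum>j\<le>a - i. c i j * x^i * y^j)" using assms by (auto simp: bipoly_def)
  obtain d where d: "\<And>x y. g x y = (\<Sum>i\<le>b. \<Sum>j\<le>b - i. d i j * x^i * y^j)" using assms by (auto simp: bipoly_def)
  have eq: "(\<lambda>x y. f x y * g x y) = (\<lambda>x y. \<Sum>i\<le>a. \<Sum>j\<le>a-i. \<Sum>i'\<le>b. \<Sum>j'\<le>b-i'.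
     (c i j * d i' j') * x^(i+i') * y^(j+j'))"
  proof (intro ext)
    fix x y
    have "f x y * g x y = (\<Sum>i\<le>a. \<Sum>j\<le>a-i. \<Sum>i'\<le>b. \<Sum>j'\<le>b-i'.
     (c i j * x^i * y^j) * (d i' j' * x^i' * y^j'))"
      unfolding c d sum_distrib_right unfolding sum_distrib_left ..
    also have "\<dots> = (\<Sum>i\<le>a. \<Sum>j\<le>a-i. \<Sum>i'\<le>b. \<Sum>j'\<le>b-i'.
     (c i j * d i' j') * x^(i+i') * y^(j+j'))"
      by (intro sum.cong refl) (simp add: power_add algebra_simps)
    finally show "f x y * g x y = \<dots>" .
  qed
  show ?thesis unfolding eq by (intro bipoly_sum bipoly_monomial) auto
qed

lemma bipoly_const: "(\<lambda>x y. t) \<in> bipoly k"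
  using bipoly_monomial[of 0 0 k t] by simp

lemma bipoly_affine: "(\<lambda>x y. a * x + b * y + c) \<in> bipoly 1"
proof -
  have h1: "(\<lambda>x y. a * x^1 * y^0) \<in> bipoly 1" by (rule bipoly_monomial) simp
  have h2: "(\<lambda>x y. b * x^0 * y^1) \<in> bipoly 1" by (rule bipoly_monomial) simp
  have "(\<lambda>x y. a * x^1 * y^0 + b * x^0 * y^1) \<in> bipoly 1"
    by (rule bipoly_add[OF h1 h2])
  hence "(\<lambda>x y. (a * x^1 * y^0 + b * x^0 * y^1) + c) \<in> bipoly 1" by (rule bipoly_add[OF _ bipoly_const])
  thus ?thesis by simp
qed

lemma bipoly_power: "f \<in> bipoly a \<Longrightarrow> (\<lambda>x y. f x y ^ n) \<in> bipoly (a * n)"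
proof (induction n)
  case 0 thus ?case using bipoly_const[of 1 0] by simp
next
  case (Suc n)
  hence "(\<lambda>x y. f x y * f x y ^ n) \<in> bipoly (a + a * n)" using bipoly_mult by blast
  thus ?case by (simp add: algebra_simps)
qed

lemma matrix_vector_chart_component: "((A::real^3^3) *v vector [x, y, 1]) $ r = A$r$1 * x + A$r$2 * y + A$r$3"
  by (simp add: matrix_vector_mult_def sum_3)

lemma H_chart_bipoly: fixes A :: "real^3^3" assumes "f \<in> H k" shows "(\<lambda>x y. f (A *v vector [x, y, 1])) \<in> bipoly k"
proof -
  obtain c where f: "f = monoms k c" using assms by (auto simp: H_def)
  let ?L = "\<lambda>r x y. A$r$1 * x + A$r$2 * y + A$r$3"
  have eq: "(\<lambda>x y. f (A *v vector [x, y, 1])) = (\<lambda>x y. \<Sum>i\<le>k. \<Sum>j\<le>k-i. c i j * ((?L 1 x y ^ i * ?L 2 x y ^ j) * ?L 3 x y ^ (k-i-j)))"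
    unfolding f monoms_def matrix_vector_chart_component by (simp add: algebra_simps)
  show ?thesis unfolding eq
  proof (intro bipoly_sum bipoly_scale)
    fix i j assume "i \<in> {..k}" "j \<in> {..k-i}"
    hence kk: "k = (1*i + 1*j) + 1*(k-i-j)" by auto
    have "(\<lambda>x y. (?L 1 x y ^ i * ?L 2 x y ^ j) * ?L 3 x y ^ (k-i-j)) \<in> bipoly ((1*i + 1*j) + 1*(k-i-j))"
      by (intro bipoly_mult bipoly_power bipoly_affine)
    thus "(\<lambda>x y. (?L 1 x y ^ i * ?L 2 x y ^ j) * ?L 3 x y ^ (k-i-j)) \<in> bipoly k" using kk by simp
  qed auto
qed

lemma local_rep_exists: "f \<in> H k \<Longrightarrow> \<exists>c. local_rep k f A c"
  using H_chart_bipoly[of f k A] unfolding bipoly_def local_rep_def by auto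

lemma matrix_vector_axis_decomp: "(A::real^3^3) *v u = u$1 *\<^sub>R (A *v axis 1 1) + u$2 *\<^sub>R (A *v axis 2 1) + u$3 *\<^sub>R (A *v axis 3 1)"
  by (simp add: vec_eq_iff forall_3 matrix_vector_mult_def sum_3 axis_def algebra_simps)

lemma matrix_vector_chart_decomp: "(A::real^3^3) *v vector [x, y, 1] = x *\<^sub>R (A *v axis 1 1) + y *\<^sub>R (A *v axis 2 1) + A *v axis 3 1"
  by (subst matrix_vector_axis_decomp) simp

lemma inner_vec3: "(a::real^3) \<bullet> b = a$1 * b$1 + a$2 * b$2 + a$3 * b$3"
  by (simp add: inner_vec_def sum_3)

definition grad_monoms_2 :: "(nat \<Rightarrow> nat \<Rightarrow> real) \<Rightarrow> real^3 \<Rightarrow> real^3" where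
  "grad_monoms_2 c a = vector [2 * c 2 0 * a$1 + c 1 1 * a$2 + c 1 0 * a$3,
                    c 1 1 * a$1 + 2 * c 0 2 * a$2 + c 0 1 * a$3,
                    c 1 0 * a$1 + c 0 1 * a$2 + 2 * c 0 0 * a$3]"

lemma vec_nth_has_derivative: "((\<lambda>v::real^3. v$i) has_derivative (\<lambda>w. w$i)) F"
  by (rule bounded_linear_imp_has_derivative[OF bounded_linear_vec_nth])

lemma monoms_2_has_derivative: "(monoms 2 c has_derivative (\<lambda>w. grad_monoms_2 c a \<bullet> w)) (at a)"
proof -
  have e: "monoms 2 c = (\<lambda>v. c 0 0 * v$3^2 + c 0 1 * v$2 * v$3 + c 0 2 * v$2^2
   + c 1 0 * v$1 * v$3 + c 1 1 * v$1 * v$2 + c 2 0 * v$1^2)" by (intro ext) (rule monoms_2_expand)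
  show ?thesis unfolding e
    apply (rule derivative_eq_intros vec_nth_has_derivative refl | simp)+
    apply (simp add: grad_monoms_2_def inner_vec3 power2_eq_square algebra_simps)
    done
qed

lemma grad_monoms_2_eq: assumes "q \<in> H 2" "q = monoms 2 c" shows "grad q a = grad_monoms_2 c a"
proof -
  have "frechet_derivative q (at a) = (\<lambda>w. grad_monoms_2 c a \<bullet> w)"
    unfolding assms(2) by (rule frechet_derivative_at[symmetric], rule monoms_2_has_derivative)
  thus ?thesis unfolding grad_def by (simp add: vec_eq_iff inner_axis)
qed

lemma H2_Euler: assumes "q \<in> H 2" shows "grad q a \<bullet> a = 2 * q a"
proof -
  obtain c where c: "q = monoms 2 c" using assms by (auto simp: H_def)
  show ?thesis unfolding grad_monoms_2_eq[OF assms c] unfolding c monoms_2_expand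
    by (simp add: grad_monoms_2_def inner_vec3 power2_eq_square algebra_simps)
qed

lemma grad_H2_scaleR: assumes "q \<in> H 2" shows "grad q (t *\<^sub>R a) = t *\<^sub>R grad q a"
proof -
  obtain c where c: "q = monoms 2 c" using assms by (auto simp: H_def)
  show ?thesis unfolding grad_monoms_2_eq[OF assms c]
    by (simp add: grad_monoms_2_def vec_eq_iff forall_3 algebra_simps)
qed

lemma H2_in_chart: assumes "q \<in> H 2"
  shows "q ((A::real^3^3) *v vector [x, y, 1]) = q (A *v axis 3 1) + x * (grad q (A *v axis 3 1) \<bullet> (A *v axis 1 1))
     + y * (grad q (A *v axis 3 1) \<bullet> (A *v axis 2 1)) + x^2 * q (A *v axis 1 1)
     + x * y * (grad q (A *v axis 1 1) \<bullet> (A *v axis 2 1)) + y^2 * q (A *v axis 2 1)"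
proof -
  obtain c where c: "q = monoms 2 c" using assms by (auto simp: H_def)
  show ?thesis unfolding matrix_vector_chart_decomp grad_monoms_2_eq[OF assms c] unfolding c monoms_2_expand
    by (simp add: grad_monoms_2_def inner_vec3 power2_eq_square algebra_simps)
qed

lemma real_poly_sum_eq_0_coeffs: assumes "\<forall>x::real. (\<Sum>i\<le>N. a i * x^i) = 0" shows "\<forall>i\<le>N. a i = 0"
proof -
  let ?p = "\<Sum>i\<le>N. monom (a i) i"
  have "poly ?p x = (\<Sum>i\<le>N. a i * x^i)" for x by (simp add: poly_sum poly_monom)
  hence "\<forall>x. poly ?p x = 0" using assms by simp
  hence p0: "?p = 0" using poly_all_0_iff_0 by blast
  show ?thesis
  proof (intro allI impI)
    fix i assume "i \<le> N"
    have "coeff ?p i = (\<Sum>j\<le>N. if j = i then a j else 0)" by (simp add: coeff_sum coeff_monom)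
    also have "\<dots> = a i" using \<open>i \<le> N\<close> by simp
    finally show "a i = 0" using p0 by simp
  qed
qed

lemma real_poly_sum_coeffs_eq: assumes "\<forall>x::real. (\<Sum>i\<le>N. a i * x^i) = (\<Sum>i\<le>N. b i * x^i)" shows "\<forall>i\<le>N. a i = b i"
proof -
  have "\<forall>x::real. (\<Sum>i\<le>N. (a i - b i) * x^i) = 0" using assms by (simp add: algebra_simps sum_subtractf)
  thus ?thesis using real_poly_sum_eq_0_coeffs[where N=N and a="\<lambda>i. a i - b i"] by auto
qed

lemma sum_atMost_4_expand: "(\<Sum>i\<le>(4::nat). a i * x^i) = a 0 + a 1 * x + a 2 * x^2 + a 3 * x^3 + a (4::nat) * (x::real)^4"
  by (simp add: numeral_eq_Suc atMost_Suc)

lemma sum_atMost_2_expand: "(\<Sum>i\<le>(2::nat). a i * x^i) = a 0 + a 1 * x + a (2::nat) * (x::real)^2"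
  by (simp add: numeral_eq_Suc atMost_Suc)

lemma triangle_sum_at_y0: "(\<Sum>i\<le>k. \<Sum>j\<le>k - i. c i j * x^i * (0::real)^j) = (\<Sum>i\<le>k. c i 0 * x^i)"
proof (intro sum.cong refl)
  fix i show "(\<Sum>j\<le>k - i. c i j * x^i * (0::real)^j) = c i 0 * x^i"
    by (subst sum.atMost_shift) (simp add: power_0_left)
qed

lemma triangle_sum_at_x0: "(\<Sum>i\<le>k. \<Sum>j\<le>k - i. c i j * (0::real)^i * y^j) = (\<Sum>j\<le>k. c 0 j * y^j)"
  by (subst sum.atMost_shift) (simp add: power_0_left)

lemma triangle_sum_4_expand: "(\<Sum>i\<le>(4::nat). \<Sum>j\<le>4 - i. c i j * x^i * y^j) =
   c 0 0 + c 0 1 * y + c 0 2 * y^2 + c 0 3 * y^3 + c 0 4 * y^4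
 + c 1 0 * x + c 1 1 * x * y + c 1 2 * x * y^2 + c 1 3 * x * y^3
 + c 2 0 * x^2 + c 2 1 * x^2 * y + c 2 2 * x^2 * y^2
 + c 3 0 * x^3 + c 3 1 * x^3 * y + c (4::nat) (0::nat) * (x::real)^4"
  by (simp add: numeral_eq_Suc atMost_Suc)

lemma isCont_nonneg_at_right:
  fixes \<phi> :: "real \<Rightarrow> real"
  assumes "isCont \<phi> 0" "\<delta> > 0" "\<And>x. 0 < x \<Longrightarrow> x < \<delta> \<Longrightarrow> \<phi> x \<ge> 0"
  shows "\<phi> 0 \<ge> 0"
proof -
  have "(\<phi> \<longlongrightarrow> \<phi> 0) (at_right 0)"
    using assms(1) by (simp add: isCont_def filterlim_at_split)
  moreover have "eventually (\<lambda>x. 0 \<le> \<phi> x) (at_right 0)"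
    using eventually_at_right_real[OF assms(2)] by (rule eventually_mono) (use assms(3) in auto)
  ultimately show ?thesis by (rule tendsto_lowerbound) simp
qed

lemma isCont_nonneg_at_left:
  fixes \<phi> :: "real \<Rightarrow> real"
  assumes "isCont \<phi> 0" "\<delta> > 0" "\<And>x. -\<delta> < x \<Longrightarrow> x < 0 \<Longrightarrow> \<phi> x \<ge> 0"
  shows "\<phi> 0 \<ge> 0"
proof -
  have "isCont (\<phi> \<circ> uminus) 0"
    by (rule continuous_at_compose) (use assms(1) in \<open>auto intro: continuous_intros\<close>)
  hence "isCont (\<lambda>x. \<phi> (-x)) 0" by (simp add: o_def)
  hence "(\<lambda>x. \<phi> (-x)) 0 \<ge> 0" by (rule isCont_nonneg_at_right[OF _ assms(2)]) (use assms(3) in auto)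
  thus ?thesis by simp
qed

lemma isCont_nonneg_punctured:
  fixes \<phi> :: "real \<Rightarrow> real"
  assumes "isCont \<phi> 0" "\<delta> > 0" "\<And>x. x \<noteq> 0 \<Longrightarrow> \<bar>x\<bar> < \<delta> \<Longrightarrow> \<phi> x \<ge> 0"
  shows "\<phi> 0 \<ge> 0"
  by (rule isCont_nonneg_at_right[OF assms(1,2)]) (use assms(3) in auto)

lemma isCont_times_x_nonneg_eq_0:
  fixes \<phi> :: "real \<Rightarrow> real"
  assumes "isCont \<phi> 0" "\<delta> > 0" "\<And>x. \<bar>x\<bar> < \<delta> \<Longrightarrow> x * \<phi> x \<ge> 0"
  shows "\<phi> 0 = 0"
proof -
  have "\<phi> 0 \<ge> 0"
  proof (rule isCont_nonneg_at_right[OF assms(1,2)])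
    fix x assume "0 < x" "x < \<delta>"
    with assms(3)[of x] show "\<phi> x \<ge> 0" by (simp add: zero_le_mult_iff)
  qed
  moreover have "(\<lambda>x. - \<phi> x) 0 \<ge> 0"
  proof (rule isCont_nonneg_at_left[OF _ assms(2)])
    show "isCont (\<lambda>x. - \<phi> x) 0" using assms(1) by (intro continuous_intros)
    fix x assume "- \<delta> < x" "x < 0"
    with assms(3)[of x] show "- \<phi> x \<ge> 0" by (simp add: zero_le_mult_iff)
  qed
  ultimately show ?thesis by simp
qed

lemma continuous_eq_0_off_point:
  fixes \<phi> :: "real \<Rightarrow> real"
  assumes "continuous_on UNIV \<phi>" "\<And>x. x \<noteq> x0 \<Longrightarrow> \<phi> x = 0"
  shows "\<phi> x0 = 0"
proof -
  have "(\<phi> \<longlongrightarrow> \<phi> x0) (at x0)" using assms(1) by (simp add: continuous_on_def)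
  moreover have "eventually (\<lambda>x. \<phi> x = 0) (at x0)"
    using assms(2) by (auto simp: eventually_at_topological)
  hence "(\<phi> \<longlongrightarrow> 0) (at x0)" by (rule tendsto_eventually)
  ultimately show ?thesis using tendsto_unique by (metis at_neq_bot)
qed

section \<open>Nonnegative quartics near a zero\<close>

abbreviation e :: "3 \<Rightarrow> real^3" where "e i \<equiv> axis i 1"

lemma chart_origin: "chart p A \<Longrightarrow> \<exists>t. t \<noteq> 0 \<and> A *v e 3 = t *\<^sub>R p"
  unfolding chart_def proj_eq_def by auto

lemma invertible_matrix_inverse: assumes "invertible (A::real^3^3)" shows "\<exists>Ai. \<forall>v. A *v (Ai *v v) = v \<and> Ai *v (A *v v) = v"
proof -
  obtain B where "A ** B = mat 1" "B ** A = mat 1" using assms unfolding invertible_def by auto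
  thus ?thesis by (intro exI[of _ B]) (simp add: matrix_vector_mul_assoc)
qed

lemma invertible_matrix_vector_eq_0: assumes "invertible (A::real^3^3)" "A *v u = 0" shows "u = 0"
  using invertible_matrix_inverse[OF assms(1)] assms(2) by (metis matrix_vector_mult_0_right)

lemma inner_matrix_vector_transpose: "(nv::real^3) \<bullet> ((A::real^3^3) *v u) = (transpose A *v nv) \<bullet> u"
  by (simp add: inner_vec3 matrix_vector_mult_def sum_3 transpose_def algebra_simps)

lemma chart_line_normal: assumes "chart_line p nv A" shows "\<exists>\<mu>. \<mu> \<noteq> 0 \<and> (\<forall>u. nv \<bullet> (A *v u) = \<mu> * u$2)"
proof -
  obtain t where t: "t \<noteq> 0" "transpose A *v nv = t *\<^sub>R e 2"
    using assms unfolding chart_line_def proj_eq_def by auto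
  have "nv \<bullet> (A *v u) = t * u$2" for u
    unfolding inner_matrix_vector_transpose t by (simp add: inner_commute[of _ u] inner_axis)
  thus ?thesis using t by auto
qed

lemma matrix_vector_chart_origin: "(A::real^3^3) *v vector [0, 0, 1] = A *v e 3"
  by (simp add: matrix_vector_chart_decomp)

lemma nonneg_local_rep_order2: assumes f: "f \<in> H 4" and nn: "\<forall>v. f v \<ge> 0" and fp: "f p = 0" and ch: "chart p A"
  and rep: "local_rep 4 f A c"
  shows "c 0 0 = 0 \<and> c 1 0 = 0 \<and> c 0 1 = 0"
proof -
  obtain t where t: "A *v e 3 = t *\<^sub>R p" using chart_origin[OF ch] by auto
  have P: "f (A *v vector [x, y, 1]) = c 0 0 + c 0 1 * y + c 0 2 * y^2 + c 0 3 * y^3 + c 0 4 * y^4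
 + c 1 0 * x + c 1 1 * x * y + c 1 2 * x * y^2 + c 1 3 * x * y^3
 + c 2 0 * x^2 + c 2 1 * x^2 * y + c 2 2 * x^2 * y^2
 + c 3 0 * x^3 + c 3 1 * x^3 * y + c 4 0 * x^4" for x y
    using rep unfolding local_rep_def triangle_sum_4_expand by simp
  have c00: "c 0 0 = 0" using P[of 0 0] by (simp add: matrix_vector_chart_origin t H_homogeneous[OF f] fp)
  have "c 1 0 = 0"
  proof -
    have "(\<lambda>x. c 1 0 + c 2 0 * x + c 3 0 * x^2 + c 4 0 * x^3) 0 = 0"
    proof (rule isCont_times_x_nonneg_eq_0[where \<delta>=1])
      show "isCont (\<lambda>x. c 1 0 + c 2 0 * x + c 3 0 * x^2 + c 4 0 * x^3) 0" by (intro continuous_intros)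
      fix x :: real
      have "x * (c 1 0 + c 2 0 * x + c 3 0 * x^2 + c 4 0 * x^3) = f (A *v vector [x, 0, 1])"
        using P[of x 0] c00 by (simp add: algebra_simps power2_eq_square power3_eq_cube power4_eq_xxxx)
      thus "0 \<le> x * (c 1 0 + c 2 0 * x + c 3 0 * x^2 + c 4 0 * x^3)" using nn by simp
    qed simp
    thus ?thesis by simp
  qed
  moreover have "c 0 1 = 0"
  proof -
    have "(\<lambda>y. c 0 1 + c 0 2 * y + c 0 3 * y^2 + c 0 4 * y^3) 0 = 0"
    proof (rule isCont_times_x_nonneg_eq_0[where \<delta>=1])
      show "isCont (\<lambda>y. c 0 1 + c 0 2 * y + c 0 3 * y^2 + c 0 4 * y^3) 0" by (intro continuous_intros)
      fix y :: real
      have "y * (c 0 1 + c 0 2 * y + c 0 3 * y^2 + c 0 4 * y^3) = f (A *v vector [0, y, 1])"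
        using P[of 0 y] c00 by (simp add: algebra_simps power2_eq_square power3_eq_cube power4_eq_xxxx)
      thus "0 \<le> y * (c 0 1 + c 0 2 * y + c 0 3 * y^2 + c 0 4 * y^3)" using nn by simp
    qed simp
    thus ?thesis by simp
  qed
  ultimately show ?thesis using c00 by simp
qed

lemma nonneg_quadratic_no_linear_term: assumes "\<forall>L::real. b * L + a * L^2 \<ge> 0" shows "b = 0"
proof -
  define K where "K = \<bar>a\<bar> + 1"
  have K: "K > 0" "a - K < 0" unfolding K_def by auto
  have "b * (-b/K) + a * (-b/K)^2 \<ge> 0" using assms by blast
  hence "K^2 * (b * (-b/K) + a * (-b/K)^2) \<ge> 0" by simp
  moreover have "K^2 * (b * (-b/K) + a * (-b/K)^2) = b^2 * (a - K)"
    using K by (simp add: field_simps power2_eq_square)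
  ultimately have "b^2 * (a - K) \<ge> 0" by simp
  hence "b^2 \<le> 0" using K(2) by (simp add: mult_le_0_iff zero_le_mult_iff)
  thus ?thesis by simp
qed

lemma local_rep_4_expand: assumes "local_rep 4 f A c"
  shows "f (A *v vector [x, y, 1]) = c 0 0 + c 0 1 * y + c 0 2 * y^2 + c 0 3 * y^3 + c 0 4 * y^4
 + c 1 0 * x + c 1 1 * x * y + c 1 2 * x * y^2 + c 1 3 * x * y^3
 + c 2 0 * x^2 + c 2 1 * x^2 * y + c 2 2 * x^2 * y^2
 + c 3 0 * x^3 + c 3 1 * x^3 * y + c 4 0 * x^4"
  using assms unfolding local_rep_def triangle_sum_4_expand by simp

lemma chart_line_chart: "chart_line p nv A \<Longrightarrow> chart p A" unfolding chart_line_def by simp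

lemma local_rep_origin_zero: assumes "h \<in> H 4" "chart s A" "local_rep 4 h A d" "d 0 0 = 0" shows "h s = 0"
proof -
  obtain t where t: "t \<noteq> 0" "A *v e 3 = t *\<^sub>R s" using chart_origin[OF assms(2)] by auto
  have "h (A *v vector [0, 0, 1]) = d 0 0" using local_rep_4_expand[OF assms(3), of 0 0] by simp
  hence "t^4 * h s = 0" using assms(4) unfolding matrix_vector_chart_origin t(2) H_homogeneous[OF assms(1)] by simp
  thus ?thesis using t by simp
qed

lemma nonneg_local_rep_xy_coeff: assumes f: "f \<in> H 4" and nn: "\<forall>v. f v \<ge> 0" and rep: "local_rep 4 f A d"
  and z: "d 0 0 = 0" "d 1 0 = 0" "d 0 1 = 0" "d 2 0 = 0" "d 3 0 = 0"
  shows "d 1 1 = 0"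
proof -
  have "\<forall>L. d 1 1 * L + d 0 2 * L^2 \<ge> 0"
  proof
    fix L :: real
    let ?g = "\<lambda>t. d 1 1 * L + d 0 2 * L^2 + t * (d 2 1 * L + d 1 2 * L^2 + d 0 3 * L^3)
       + t^2 * (d 4 0 + d 3 1 * L + d 2 2 * L^2 + d 1 3 * L^3 + d 0 4 * L^4)"
    have "?g 0 \<ge> 0"
    proof (rule isCont_nonneg_punctured[where \<delta>=1])
      show "isCont ?g 0" by (intro continuous_intros)
      fix t :: real assume t: "t \<noteq> 0"
      have "t^2 * ?g t = f (A *v vector [t, L * t, 1])"
        unfolding local_rep_4_expand[OF rep] z by (simp add: algebra_simps power2_eq_square power3_eq_cube power4_eq_xxxx)
      hence "t^2 * ?g t \<ge> 0" using nn by simp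
      thus "?g t \<ge> 0" using t by (simp add: zero_le_mult_iff)
    qed simp
    thus "d 1 1 * L + d 0 2 * L^2 \<ge> 0" by simp
  qed
  thus ?thesis by (rule nonneg_quadratic_no_linear_term)
qed

lemma Fpl_line_restriction: assumes f: "f \<in> H 4" and nn: "\<forall>v. f v \<ge> 0" and fp: "f p = 0"
  and chB: "chart_line p nv B" and repB: "local_rep 4 f B c" and c20: "c 2 0 = 0"
  shows "\<forall>x. f (B *v vector [x, 0, 1]) = c 4 0 * x^4"
proof -
  have z: "c 0 0 = 0" "c 1 0 = 0" "c 0 1 = 0" using nonneg_local_rep_order2[OF f nn fp chart_line_chart[OF chB] repB] by auto
  have P: "f (B *v vector [x, 0, 1]) = c 3 0 * x^3 + c 4 0 * x^4" for x
    unfolding local_rep_4_expand[OF repB] z c20 by simp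
  have "(\<lambda>x. c 3 0 + c 4 0 * x) 0 = 0"
  proof (rule isCont_times_x_nonneg_eq_0[where \<delta>=1])
    show "isCont (\<lambda>x. c 3 0 + c 4 0 * x) 0" by (intro continuous_intros)
    fix x :: real
    show "0 \<le> x * (c 3 0 + c 4 0 * x)"
    proof (cases "x = 0")
      case False
      have "x^2 * (x * (c 3 0 + c 4 0 * x)) = f (B *v vector [x, 0, 1])"
        unfolding P by (simp add: algebra_simps power2_eq_square power3_eq_cube power4_eq_xxxx)
      hence "x^2 * (x * (c 3 0 + c 4 0 * x)) \<ge> 0" using nn by simp
      thus ?thesis using False by (simp add: zero_le_mult_iff)
    qed simp
  qed simp
  thus ?thesis using P by simp
qed

lemma chart_line_change:
  assumes chB: "chart_line p nv B" and chA: "chart_line p nv A"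
  shows "\<exists>a b r. r \<noteq> 0 \<and> (\<forall>x. A *v vector [x, 0, 1] = B *v vector [a * x, 0, r + b * x])"
proof -
  obtain Bi where Bi: "\<And>v. B *v (Bi *v v) = v" "\<And>v. Bi *v (B *v v) = v"
    using invertible_matrix_inverse chB unfolding chart_line_def chart_def by blast
  obtain tA where tA: "tA \<noteq> 0" "A *v e 3 = tA *\<^sub>R p" using chart_origin[OF chart_line_chart[OF chA]] by auto
  obtain tB where tB: "tB \<noteq> 0" "B *v e 3 = tB *\<^sub>R p" using chart_origin[OF chart_line_chart[OF chB]] by auto
  obtain muA where muA: "\<And>u. nv \<bullet> (A *v u) = muA * u$2" using chart_line_normal[OF chA] by auto
  obtain muB where muB: "muB \<noteq> 0" "\<And>u. nv \<bullet> (B *v u) = muB * u$2" using chart_line_normal[OF chB] by auto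
  define r where "r = tA / tB"
  have Bie3: "Bi *v (A *v e 3) = r *\<^sub>R e 3"
  proof -
    have "B *v (r *\<^sub>R e 3) = A *v e 3" using tA tB by (simp add: matrix_vector_mult_scaleR r_def)
    thus ?thesis using Bi(2) by metis
  qed
  define w where "w = (\<lambda>x. Bi *v (A *v vector [x, 0, 1]))"
  have Bw: "B *v w x = A *v vector [x, 0, 1]" for x unfolding w_def using Bi(1) by simp
  have w2: "w x $ 2 = 0" for x
  proof -
    have "muB * w x $ 2 = nv \<bullet> (B *v w x)" using muB(2) by simp
    also have "\<dots> = muA * (vector [x, 0, 1] :: real^3) $ 2" unfolding Bw muA ..
    finally show ?thesis using muB(1) by simp
  qed
  have "w x = x *\<^sub>R (Bi *v (A *v e 1)) + r *\<^sub>R e 3" for x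
    unfolding w_def matrix_vector_chart_decomp
    by (simp add: matrix_vector_right_distrib matrix_vector_mult_scaleR Bie3)
  hence "w x = vector [(Bi *v (A *v e 1))$1 * x, 0, r + (Bi *v (A *v e 1))$3 * x]" for x
    using w2[of x] by (simp add: vec_eq_iff forall_3 axis_def)
  moreover have "r \<noteq> 0" using tA tB unfolding r_def by auto
  ultimately show ?thesis using Bw by metis
qed

lemma line_restriction_chart_independent:
  assumes f: "f \<in> H 4" and chB: "chart_line p nv B" and chA: "chart_line p nv A"
    and PB: "\<forall>x. f (B *v vector [x, 0, 1]) = \<kappa> * x^4"
  shows "\<exists>\<kappa>'. \<forall>x. f (A *v vector [x, 0, 1]) = \<kappa>' * x^4"
proof -
  obtain a b r where r: "r \<noteq> 0" and AB: "\<And>x. A *v vector [x, 0, 1] = B *v vector [a * x, 0, r + b * x]"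
    using chart_line_change[OF chB chA] by blast
  define \<phi> where "\<phi> = (\<lambda>x. f (A *v vector [x, 0, 1]) - \<kappa> * (a * x)^4)"
  have off: "\<phi> x = 0" if "x \<noteq> -r/b" for x
  proof -
    have nz: "r + b * x \<noteq> 0" using r that by (cases "b = 0") (auto simp: field_simps)
    hence "vector [a * x, 0, r + b * x] = (r + b * x) *\<^sub>R (vector [a * x / (r + b * x), 0, 1] :: real^3)"
      by (simp add: vec_eq_iff forall_3)
    hence "f (A *v vector [x, 0, 1]) = (r + b * x)^4 * (\<kappa> * (a * x / (r + b * x))^4)"
      unfolding AB by (simp add: matrix_vector_mult_scaleR H_homogeneous[OF f] PB)
    also have "\<dots> = \<kappa> * (a * x)^4" using nz by (simp add: field_simps power_divide)
    finally show ?thesis unfolding \<phi>_def by simp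
  qed
  have "continuous_on UNIV (\<lambda>x. A *v vector [x, 0, 1])" unfolding matrix_vector_chart_decomp
    by (intro continuous_intros)
  hence "continuous_on UNIV (\<lambda>x. f (A *v vector [x, 0, 1]))"
    by (rule continuous_on_compose2[OF continuous_on_H[OF f]]) auto
  hence "continuous_on UNIV \<phi>" unfolding \<phi>_def by (intro continuous_intros)
  hence "\<phi> (-r/b) = 0" using off by (rule continuous_eq_0_off_point)
  with off have "\<phi> x = 0" for x by metis
  thus ?thesis unfolding \<phi>_def by (intro exI[of _ "\<kappa> * a^4"]) (simp add: power_mult_distrib)
qed

lemma local_rep_line_quartic_coeffs: assumes rep: "local_rep 4 f A d" and P: "\<forall>x. f (A *v vector [x, 0, 1]) = \<kappa> * x^4"
  shows "d 0 0 = 0 \<and> d 1 0 = 0 \<and> d 2 0 = 0 \<and> d 3 0 = 0"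
proof -
  have "\<forall>x::real. (\<Sum>i\<le>4. d i 0 * x^i) = (\<Sum>i\<le>4. (if i = 4 then \<kappa> else 0) * x^i)"
  proof
    fix x :: real
    have "(\<Sum>i\<le>4. d i 0 * x^i) = f (A *v vector [x, 0, 1])"
      using rep unfolding local_rep_def by (simp add: triangle_sum_at_y0)
    moreover have "(\<Sum>i\<le>4. (if i = 4 then \<kappa> else 0) * x^i) = \<kappa> * x^4"
      by (simp only: sum_atMost_4_expand) simp
    ultimately show "(\<Sum>i\<le>4. d i 0 * x^i) = (\<Sum>i\<le>4. (if i = 4 then \<kappa> else 0) * x^i)" using P
      by simp
  qed
  note h = real_poly_sum_coeffs_eq[OF this, rule_format]
  show ?thesis using h[of 0] h[of 1] h[of 2] h[of 3] by simp
qed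

lemma Fpl_local_rep_coeffs: assumes f: "f \<in> H 4" and nn: "\<forall>v. f v \<ge> 0" and fp: "f p = 0"
  and chB: "chart_line p nv B" and repB: "local_rep 4 f B c" and c20: "c 2 0 = 0"
  and chA: "chart_line p nv A" and repA: "local_rep 4 f A d"
  shows "d 0 0 = 0 \<and> d 1 0 = 0 \<and> d 0 1 = 0 \<and> d 2 0 = 0 \<and> d 1 1 = 0 \<and> d 3 0 = 0"
proof -
  obtain \<kappa>' where "\<forall>x. f (A *v vector [x, 0, 1]) = \<kappa>' * x^4"
    using line_restriction_chart_independent[OF f chB chA Fpl_line_restriction[OF f nn fp chB repB c20]] by blast
  from local_rep_line_quartic_coeffs[OF repA this] have z: "d 0 0 = 0" "d 1 0 = 0" "d 2 0 = 0" "d 3 0 = 0" by auto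
  have "d 0 1 = 0" using nonneg_local_rep_order2[OF f nn fp chart_line_chart[OF chA] repA] by auto
  with z nonneg_local_rep_xy_coeff[OF f nn repA] show ?thesis by auto
qed

lemma chart_line_exists: assumes p: "(p::real^3) \<noteq> 0" and nv: "nv \<noteq> 0" and o: "nv \<bullet> p = 0"
  shows "\<exists>A. chart_line p nv A"
proof -
  define u :: "real^3" where "u = vector [nv$2 * p$3 - nv$3 * p$2, nv$3 * p$1 - nv$1 * p$3, nv$1 * p$2 - nv$2 * p$1]"
  define A :: "real^3^3" where "A = (\<chi> i j. if j = 1 then u$i else if j = 2 then nv$i else p$i)"
  have o': "nv$1 * p$1 + nv$2 * p$2 + nv$3 * p$3 = 0" using o by (simp add: inner_vec3)
  have lag: "u$1^2 + u$2^2 + u$3^2 = (nv$1^2 + nv$2^2 + nv$3^2) * (p$1^2 + p$2^2 + p$3^2) - (nv$1 * p$1 + nv$2 * p$2 + nv$3 * p$3)^2"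
    unfolding u_def by (simp add: power2_eq_square algebra_simps)
  have np: "nv$1^2 + nv$2^2 + nv$3^2 > 0"
  proof -
    have "nv \<bullet> nv > 0" using nv by simp
    thus ?thesis by (simp add: inner_vec3 power2_eq_square)
  qed
  have pp: "p$1^2 + p$2^2 + p$3^2 > 0"
  proof -
    have "p \<bullet> p > 0" using p by simp
    thus ?thesis by (simp add: inner_vec3 power2_eq_square)
  qed
  have upos: "u$1^2 + u$2^2 + u$3^2 > 0" unfolding lag o' using np pp by simp
  have "det A = u$1^2 + u$2^2 + u$3^2"
    unfolding det_3 A_def u_def by (simp add: power2_eq_square algebra_simps)
  hence inv: "invertible A" using upos by (simp add: invertible_det_nz)
  have Ae3: "A *v e 3 = p"
    by (simp add: A_def vec_eq_iff forall_3 matrix_vector_mult_def sum_3 axis_def)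
  have "transpose A *v nv = (nv$1^2 + nv$2^2 + nv$3^2) *\<^sub>R e 2"
    using o' by (simp add: A_def u_def vec_eq_iff forall_3 matrix_vector_mult_def sum_3 axis_def transpose_def
        power2_eq_square algebra_simps)
  hence "proj_eq (transpose A *v nv) (e 2)" unfolding proj_eq_def using np by auto
  moreover have "proj_eq (A *v e 3) p" unfolding Ae3 proj_eq_def by (intro exI[of _ 1]) simp
  ultimately show ?thesis using inv unfolding chart_line_def chart_def by blast
qed

lemma exists_orthogonal_nonzero: assumes "(p::real^3) \<noteq> 0" shows "\<exists>nv. nv \<noteq> 0 \<and> nv \<bullet> p = 0"
proof (cases "p$1 = 0 \<and> p$2 = 0")
  case True
  thus ?thesis by (intro exI[of _ "e 1"]) (simp add: inner_axis' axis_eq_0_iff)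
next
  case False
  thus ?thesis by (intro exI[of _ "vector [p$2, - p$1, 0]"]) (auto simp: inner_vec3 vec_eq_iff forall_3)
qed

lemma chart_exists: assumes "(p::real^3) \<noteq> 0" shows "\<exists>A. chart p A"
  using exists_orthogonal_nonzero[OF assms] chart_line_exists[OF assms] chart_line_chart by blast

lemma chart_e1_not_proj_eq:
  assumes ch: "chart p A" shows "\<not> proj_eq (A *v e 1) p"
proof
  assume "proj_eq (A *v e 1) p"
  then obtain \<tau> where \<tau>: "A *v e 1 = \<tau> *\<^sub>R p" unfolding proj_eq_def by auto
  obtain t where t: "t \<noteq> 0" "A *v e 3 = t *\<^sub>R p" using chart_origin[OF ch] by auto
  have "A *v (e 1 - (\<tau> / t) *\<^sub>R e 3) = 0"
    using \<tau> t by (simp add: matrix_vector_mult_diff_distrib matrix_vector_mult_scaleR)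
  hence "e 1 - (\<tau> / t) *\<^sub>R e 3 = (0::real^3)"
    using invertible_matrix_vector_eq_0 ch unfolding chart_def by blast
  hence "(e 1 - (\<tau> / t) *\<^sub>R e 3) $ 1 = (0::real)" by simp
  thus False by (simp add: axis_def)
qed

section \<open>Local upper bounds for elements of I_S\<close>

lemma abs_triangle_sum_bound:
  assumes "\<And>i j. i \<le> k \<Longrightarrow> j \<le> k - i \<Longrightarrow> d i j = 0 \<or> \<bar>x^i * y^j\<bar> \<le> (B::real)"
  shows "\<bar>\<Sum>i\<le>k. \<Sum>j\<le>k - i. d i j * x^i * y^j\<bar> \<le> (\<Sum>i\<le>k. \<Sum>j\<le>k - i. \<bar>d i j\<bar>) * B"
proof -
  have "\<bar>\<Sum>i\<le>k. \<Sum>j\<le>k - i. d i j * x^i * y^j\<bar> \<le> (\<Sum>i\<le>k. \<Sum>j\<le>k - i. \<bar>d i j * x^i * y^j\<bar>)"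
    by (rule order_trans[OF sum_abs sum_mono]) (rule sum_abs)
  also have "\<dots> \<le> (\<Sum>i\<le>k. \<Sum>j\<le>k - i. \<bar>d i j\<bar> * B)"
  proof (intro sum_mono)
    fix i j assume "i \<in> {..k}" "j \<in> {..k-i}"
    hence "d i j = 0 \<or> \<bar>x^i * y^j\<bar> \<le> B" using assms by auto
    thus "\<bar>d i j * x^i * y^j\<bar> \<le> \<bar>d i j\<bar> * B"
      by (auto simp: abs_mult mult.assoc intro: mult_left_mono)
  qed
  also have "\<dots> = (\<Sum>i\<le>k. \<Sum>j\<le>k - i. \<bar>d i j\<bar>) * B" by (simp add: sum_distrib_right)
  finally show ?thesis .
qed

lemma abs_power_le_one: "\<bar>x::real\<bar> \<le> 1 \<Longrightarrow> \<bar>x^n\<bar> \<le> 1"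
  by (simp add: power_abs power_le_one)

lemma abs_power_le_square: "\<bar>x::real\<bar> \<le> 1 \<Longrightarrow> n \<ge> 2 \<Longrightarrow> \<bar>x^n\<bar> \<le> x^2"
proof -
  assume a: "\<bar>x\<bar> \<le> 1" "n \<ge> 2"
  have "\<bar>x^n\<bar> = \<bar>x\<bar>^n" by (simp add: power_abs)
  also have "\<dots> \<le> \<bar>x\<bar>^2" using a by (intro power_decreasing) auto
  also have "\<dots> = x^2" by simp
  finally show ?thesis .
qed

lemma two_abs_mult_le_sum_squares: "2 * \<bar>a * b\<bar> \<le> a^2 + (b::real)^2"
proof -
  have "0 \<le> (\<bar>a\<bar> - \<bar>b\<bar>)^2" by simp
  thus ?thesis by (simp add: power2_eq_square abs_mult algebra_simps)
qed

lemma abs_monomial_le_quadratic: assumes "\<bar>x::real\<bar> \<le> 1" "\<bar>y\<bar> \<le> 1" "i + j \<ge> 2"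
  shows "\<bar>x^i * y^j\<bar> \<le> x^2 + y^2"
proof -
  have x2: "x^2 \<ge> 0" and y2: "y^2 \<ge> 0" by simp_all
  consider "i \<ge> 2" | "i = 1" "j \<ge> 1" | "i = 0" "j \<ge> 2" using assms(3) by linarith
  thus ?thesis
  proof cases
    case 1
    have "\<bar>x^i * y^j\<bar> = \<bar>x^i\<bar> * \<bar>y^j\<bar>" by (simp add: abs_mult)
    also have "\<dots> \<le> x^2 * 1" using abs_power_le_square[OF assms(1) 1] abs_power_le_one[OF assms(2)]
      by (intro mult_mono) auto
    finally have "\<bar>x^i * y^j\<bar> \<le> x^2" by simp
    thus ?thesis using y2 by linarith
  next
    case 2
    have "\<bar>x^i * y^j\<bar> = \<bar>x\<bar> * \<bar>y^j\<bar>" using 2 by (simp add: abs_mult)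
    also have "\<dots> \<le> \<bar>x\<bar> * \<bar>y\<bar>"
    proof (intro mult_left_mono)
      have "\<bar>y^j\<bar> = \<bar>y\<bar>^j" by (simp add: power_abs)
      also have "\<dots> \<le> \<bar>y\<bar>^1" using 2 assms by (intro power_decreasing) auto
      finally show "\<bar>y^j\<bar> \<le> \<bar>y\<bar>" by simp
    qed simp
    also have "\<dots> \<le> x^2 + y^2" using two_abs_mult_le_sum_squares[of x y] abs_ge_zero[of x] abs_ge_zero[of y]
      by (simp add: abs_mult) (smt (verit) mult_nonneg_nonneg)
    finally show ?thesis .
  next
    case 3
    have "\<bar>x^i * y^j\<bar> = \<bar>y^j\<bar>" using 3 by simp
    also have "\<dots> \<le> y^2" using abs_power_le_square[OF assms(2) 3(2)] .
    finally have "\<bar>x^i * y^j\<bar> \<le> y^2" .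
    thus ?thesis using x2 by linarith
  qed
qed

lemma abs_monomial_le_weighted: assumes "\<bar>x::real\<bar> \<le> 1" "\<bar>y\<bar> \<le> 1" "i + j \<le> 4"
  "\<not> (i = 0 \<and> j = 0)" "\<not> (i = 1 \<and> j = 0)" "\<not> (i = 0 \<and> j = 1)" "\<not> (i = 2 \<and> j = 0)"
  "\<not> (i = 1 \<and> j = 1)" "\<not> (i = 3 \<and> j = 0)"
  shows "\<bar>x^i * y^j\<bar> \<le> y^2 + x^4"
proof -
  have x4: "x^4 \<ge> 0" by simp
  have y2: "y^2 \<ge> 0" by simp
  have "j \<ge> 2 \<or> (j = 1 \<and> i \<ge> 2) \<or> (j = 0 \<and> i = 4)" using assms(3-9) by presburger
  then consider "j \<ge> 2" | "j = 1" "i \<ge> 2" | "j = 0" "i = 4" by blast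
  thus ?thesis
  proof cases
    case 1
    have "\<bar>x^i * y^j\<bar> = \<bar>x^i\<bar> * \<bar>y^j\<bar>" by (simp add: abs_mult)
    also have "\<dots> \<le> 1 * y^2" using abs_power_le_square[OF assms(2) 1] abs_power_le_one[OF assms(1)]
      by (intro mult_mono) auto
    finally have "\<bar>x^i * y^j\<bar> \<le> y^2" by simp
    thus ?thesis using x4 by linarith
  next
    case 2
    have "\<bar>x^i * y^j\<bar> = \<bar>x^i\<bar> * \<bar>y\<bar>" using 2 by (simp add: abs_mult)
    also have "\<dots> \<le> x^2 * \<bar>y\<bar>" using abs_power_le_square[OF assms(1) 2(2)] by (intro mult_right_mono) auto
    also have "\<dots> \<le> (y^2 + (x^2)^2) / 2" using two_abs_mult_le_sum_squares[of y "x^2"] by (simp add: abs_mult algebra_simps)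
    also have "\<dots> \<le> y^2 + x^4" using x4 y2 by (simp add: power_mult[symmetric])
    finally show ?thesis .
  next
    case 3 thus ?thesis using y2 by (simp add: power_abs)
  qed
qed

lemma Ipt_local_upper_bound: assumes rep: "local_rep 4 h A d" and z: "d 0 0 = 0" "d 1 0 = 0" "d 0 1 = 0"
  and xy: "\<bar>x\<bar> \<le> 1" "\<bar>y\<bar> \<le> 1"
  shows "\<bar>h (A *v vector [x, y, 1])\<bar> \<le> (\<Sum>i\<le>4. \<Sum>j\<le>4 - i. \<bar>d i j\<bar>) * (x^2 + y^2)"
proof -
  have "\<bar>\<Sum>i\<le>4. \<Sum>j\<le>4 - i. d i j * x^i * y^j\<bar> \<le> (\<Sum>i\<le>4. \<Sum>j\<le>4 - i. \<bar>d i j\<bar>) * (x^2 + y^2)"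
  proof (rule abs_triangle_sum_bound)
    fix i j :: nat assume "i \<le> 4" "j \<le> 4 - i"
    show "d i j = 0 \<or> \<bar>x^i * y^j\<bar> \<le> x^2 + y^2"
    proof (cases "i + j \<ge> 2")
      case True thus ?thesis using abs_monomial_le_quadratic[OF xy True] by simp
    next
      case False
      hence "(i = 0 \<and> j = 0) \<or> (i = 1 \<and> j = 0) \<or> (i = 0 \<and> j = 1)" by presburger
      thus ?thesis using z by blast
    qed
  qed
  thus ?thesis using rep unfolding local_rep_def by simp
qed

lemma Ipl_local_upper_bound: assumes rep: "local_rep 4 h A d"
  and z: "d 0 0 = 0" "d 1 0 = 0" "d 0 1 = 0" "d 2 0 = 0" "d 1 1 = 0" "d 3 0 = 0"
  and xy: "\<bar>x\<bar> \<le> 1" "\<bar>y\<bar> \<le> 1"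
  shows "\<bar>h (A *v vector [x, y, 1])\<bar> \<le> (\<Sum>i\<le>4. \<Sum>j\<le>4 - i. \<bar>d i j\<bar>) * (y^2 + x^4)"
proof -
  have "\<bar>\<Sum>i\<le>4. \<Sum>j\<le>4 - i. d i j * x^i * y^j\<bar> \<le> (\<Sum>i\<le>4. \<Sum>j\<le>4 - i. \<bar>d i j\<bar>) * (y^2 + x^4)"
  proof (rule abs_triangle_sum_bound)
    fix i j :: nat assume ij: "i \<le> 4" "j \<le> 4 - i"
    show "d i j = 0 \<or> \<bar>x^i * y^j\<bar> \<le> y^2 + x^4"
    proof (cases "(i = 0 \<and> j = 0) \<or> (i = 1 \<and> j = 0) \<or> (i = 0 \<and> j = 1) \<or> (i = 2 \<and> j = 0) \<or> (i = 1 \<and> j = 1) \<or> (i = 3 \<and> j = 0)")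
      case True thus ?thesis using z by blast
    next
      case False
      have ij4: "i + j \<le> 4" using ij by simp
      show ?thesis using abs_monomial_le_weighted[OF xy ij4] False by blast
    qed
  qed
  thus ?thesis using rep unfolding local_rep_def by simp
qed

section \<open>Local lower bounds for sums of two squares\<close>

lemma square_le_of_abs_le: "\<bar>a::real\<bar> \<le> b \<Longrightarrow> a^2 \<le> b^2"
  by (metis abs_ge_zero abs_le_square_iff abs_of_nonneg order_trans)

lemma two_square_add_ge: "2 * (L + R)^2 \<ge> L^2 - 2 * (R::real)^2"
proof -
  have "2 * (L + R)^2 - (L^2 - 2 * R^2) = (L + 2*R)^2" by (simp add: power2_eq_square algebra_simps)
  moreover have "(L + 2*R)^2 \<ge> 0" by simp
  ultimately show ?thesis by linarith
qed

lemma perturbed_sum_squares_lower_bound: fixes La Lb Ra Rb K N r :: real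
  assumes K: "K > 0" and r: "r \<ge> 0" "r \<le> K * (La^2 + Lb^2)" and Ra: "\<bar>Ra\<bar> \<le> N * r" and Rb: "\<bar>Rb\<bar> \<le> N * r"
    and N: "N \<ge> 0" and small: "N^2 * r \<le> 1/(8*K)"
  shows "(La + Ra)^2 + (Lb + Rb)^2 \<ge> r / (4*K)"
proof -
  have a: "Ra^2 \<le> (N*r)^2" by (rule square_le_of_abs_le[OF Ra])
  have b: "Rb^2 \<le> (N*r)^2" by (rule square_le_of_abs_le[OF Rb])
  have "(N*r)^2 = (N^2 * r) * r" by (simp add: power2_eq_square)
  also have "\<dots> \<le> (1/(8*K)) * r" using small r(1) by (rule mult_right_mono)
  finally have c: "(N*r)^2 \<le> r / (8*K)" by simp
  define u where "u = r / (8*K)"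
  have d: "8 * u \<le> La^2 + Lb^2" using r(2) K unfolding u_def by (simp add: field_simps)
  have e: "2 * (La + Ra)^2 + 2 * (Lb + Rb)^2 \<ge> La^2 - 2 * Ra^2 + (Lb^2 - 2 * Rb^2)"
    using two_square_add_ge[of La Ra] two_square_add_ge[of Lb Rb] by linarith
  have f: "r / (4*K) = 2 * u" using K unfolding u_def by (simp add: field_simps)
  have c': "(N*r)^2 \<le> u" using c unfolding u_def .
  show ?thesis unfolding f using a b c' d e by linarith
qed

lemma sum_squares_le_linear_image: fixes a1 a2 b1 b2 x y :: real
  assumes D: "a1 * b2 - a2 * b1 \<noteq> 0"
  shows "x^2 + y^2 \<le> (2 * (a1^2 + a2^2 + b1^2 + b2^2) / (a1 * b2 - a2 * b1)^2) * ((a1*x + a2*y)^2 + (b1*x + b2*y)^2)"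
proof -
  define D where "D = a1 * b2 - a2 * b1"
  define La where "La = a1*x + a2*y"
  define Lb where "Lb = b1*x + b2*y"
  define S where "S = a1^2 + a2^2 + b1^2 + b2^2"
  have D2: "D^2 > 0" using D unfolding D_def by simp
  have id: "D^2 * (x^2 + y^2) = (b2 * La - a2 * Lb)^2 + (a1 * Lb - b1 * La)^2"
    unfolding D_def La_def Lb_def by (simp add: power2_eq_square algebra_simps)
  have e1: "(b2 * La - a2 * Lb)^2 \<le> 2 * (b2^2 * La^2 + a2^2 * Lb^2)"
  proof -
    have "0 \<le> (b2 * La + a2 * Lb)^2" by simp
    thus ?thesis by (simp add: power2_eq_square algebra_simps)
  qed
  have e2: "(a1 * Lb - b1 * La)^2 \<le> 2 * (a1^2 * Lb^2 + b1^2 * La^2)"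
  proof -
    have "0 \<le> (a1 * Lb + b1 * La)^2" by simp
    thus ?thesis by (simp add: power2_eq_square algebra_simps)
  qed
  have e3: "2 * (b2^2 * La^2 + a2^2 * Lb^2) + 2 * (a1^2 * Lb^2 + b1^2 * La^2) \<le> 2 * S * (La^2 + Lb^2)"
  proof -
    have "0 \<le> (a1^2 + a2^2) * La^2 + (b1^2 + b2^2) * Lb^2" by simp
    thus ?thesis unfolding S_def by (simp add: algebra_simps)
  qed
  have "D^2 * (x^2 + y^2) \<le> 2 * S * (La^2 + Lb^2)" using id e1 e2 e3 by linarith
  hence "x^2 + y^2 \<le> 2 * S * (La^2 + Lb^2) / D^2" using D2 by (simp add: field_simps)
  thus ?thesis unfolding D_def S_def La_def Lb_def by (simp add: field_simps)
qed

lemma abs_quadratic_le_sum_squares: "\<bar>R1 * x^2 + R2 * x * y + R3 * y^2\<bar> \<le> (\<bar>R1\<bar> + \<bar>R2\<bar> + \<bar>R3\<bar>) * (x^2 + (y::real)^2)"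
proof -
  have xy: "\<bar>x * y\<bar> \<le> x^2 + y^2"
  proof -
    have "2 * \<bar>x * y\<bar> \<le> x^2 + y^2" by (rule two_abs_mult_le_sum_squares)
    moreover have "\<bar>x * y\<bar> \<ge> 0" by simp
    ultimately show ?thesis by linarith
  qed
  have t: "\<bar>R1 * x^2 + R2 * x * y + R3 * y^2\<bar> \<le> \<bar>R1 * x^2\<bar> + \<bar>R2 * x * y\<bar> + \<bar>R3 * y^2\<bar>"
    by (rule order_trans[OF abs_triangle_ineq add_right_mono[OF abs_triangle_ineq]])
  have a1: "\<bar>R1 * x^2\<bar> \<le> \<bar>R1\<bar> * (x^2 + y^2)" by (simp add: abs_mult mult_left_mono)
  have a2: "\<bar>R2 * x * y\<bar> \<le> \<bar>R2\<bar> * (x^2 + y^2)" using xy by (simp add: abs_mult mult.assoc mult_left_mono)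
  have a3: "\<bar>R3 * y^2\<bar> \<le> \<bar>R3\<bar> * (x^2 + y^2)" by (simp add: abs_mult mult_left_mono)
  have "(\<bar>R1\<bar> + \<bar>R2\<bar> + \<bar>R3\<bar>) * (x^2 + y^2) = \<bar>R1\<bar> * (x^2 + y^2) + \<bar>R2\<bar> * (x^2 + y^2) + \<bar>R3\<bar> * (x^2 + y^2)"
    by (simp add: algebra_simps)
  thus ?thesis using t a1 a2 a3 by linarith
qed

lemma abs_linear_le_bound: assumes "\<bar>x\<bar> \<le> d0" "\<bar>y\<bar> \<le> d0"
  shows "\<bar>a * x + b * (y::real)\<bar> \<le> (\<bar>a\<bar> + \<bar>b\<bar>) * d0"
proof -
  have "\<bar>a * x + b * y\<bar> \<le> \<bar>a\<bar> * \<bar>x\<bar> + \<bar>b\<bar> * \<bar>y\<bar>" by (metis abs_mult abs_triangle_ineq)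
  also have "\<dots> \<le> \<bar>a\<bar> * d0 + \<bar>b\<bar> * d0" using assms by (intro add_mono mult_left_mono) auto
  finally show ?thesis by (simp add: algebra_simps)
qed

lemma weighted_sum_squares_lower_bound: fixes \<beta> \<gamma> \<sigma> \<tau> \<delta> \<epsilon> x y d0 :: real
  assumes xy: "\<bar>x\<bar> \<le> d0" "\<bar>y\<bar> \<le> d0"
    and s1: "2 * ((\<bar>\<sigma>\<bar> + \<bar>\<tau>\<bar>) * d0) \<le> \<bar>\<beta>\<bar>"
    and s2: "8 * ((\<bar>\<delta>\<bar> + \<bar>\<epsilon>\<bar>) * d0)^2 \<le> \<beta>^2"
  shows "(y * (\<beta> + \<sigma> * x + \<tau> * y))^2 + (\<gamma> * x^2 + y * (\<delta> * x + \<epsilon> * y))^2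
     \<ge> min (\<beta>^2/8) (\<gamma>^2/2) * (y^2 + x^4)"
proof -
  have b1: "\<bar>\<sigma> * x + \<tau> * y\<bar> \<le> (\<bar>\<sigma>\<bar> + \<bar>\<tau>\<bar>) * d0" by (rule abs_linear_le_bound[OF xy])
  have b2: "\<bar>\<beta> + \<sigma> * x + \<tau> * y\<bar> \<ge> \<bar>\<beta>\<bar> / 2"
  proof -
    have "\<bar>\<beta>\<bar> \<le> \<bar>\<beta> + (\<sigma> * x + \<tau> * y)\<bar> + \<bar>\<sigma> * x + \<tau> * y\<bar>" by (smt (verit) abs_triangle_ineq4)
    thus ?thesis using b1 s1 by (simp add: add.assoc)
  qed
  have b3: "(\<beta> + \<sigma> * x + \<tau> * y)^2 \<ge> \<beta>^2 / 4"
  proof -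
    have "(\<bar>\<beta>\<bar> / 2)^2 \<le> (\<bar>\<beta> + \<sigma> * x + \<tau> * y\<bar>)^2"
      using b2 by (intro power_mono) auto
    thus ?thesis by (simp add: power_divide)
  qed
  have T1: "(y * (\<beta> + \<sigma> * x + \<tau> * y))^2 \<ge> y^2 * (\<beta>^2 / 4)"
    unfolding power_mult_distrib by (intro mult_left_mono b3) simp
  define w where "w = \<delta> * x + \<epsilon> * y"
  have w1: "\<bar>w\<bar> \<le> (\<bar>\<delta>\<bar> + \<bar>\<epsilon>\<bar>) * d0" unfolding w_def by (rule abs_linear_le_bound[OF xy])
  have w2: "w^2 \<le> \<beta>^2 / 8"
  proof -
    have "w^2 \<le> ((\<bar>\<delta>\<bar> + \<bar>\<epsilon>\<bar>) * d0)^2" by (rule square_le_of_abs_le[OF w1])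
    thus ?thesis using s2 by simp
  qed
  have T2a: "(y * w)^2 \<le> y^2 * (\<beta>^2 / 8)" unfolding power_mult_distrib by (intro mult_left_mono w2) simp
  have T2: "2 * (\<gamma> * x^2 + y * w)^2 \<ge> \<gamma>^2 * x^4 - 2 * (y * w)^2"
    using two_square_add_ge[of "\<gamma> * x^2" "y * w"] by (simp add: power_mult_distrib power_mult[symmetric])
  define Z where "Z = y^2 * \<beta>^2"
  define G where "G = \<gamma>^2 * x^4"
  have T1': "(y * (\<beta> + \<sigma> * x + \<tau> * y))^2 \<ge> Z / 4" using T1 unfolding Z_def by simp
  have T2a': "(y * w)^2 \<le> Z / 8" using T2a unfolding Z_def by simp
  have T2': "2 * (\<gamma> * x^2 + y * w)^2 \<ge> G - 2 * (y * w)^2" using T2 unfolding G_def .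
  have main0: "(y * (\<beta> + \<sigma> * x + \<tau> * y))^2 + (\<gamma> * x^2 + y * w)^2 \<ge> Z/8 + G/2"
    using T1' T2a' T2' by linarith
  have main: "(y * (\<beta> + \<sigma> * x + \<tau> * y))^2 + (\<gamma> * x^2 + y * w)^2 \<ge> (\<beta>^2/8) * y^2 + (\<gamma>^2/2) * x^4"
    using main0 unfolding Z_def G_def by (simp add: algebra_simps)
  have m1: "min (\<beta>^2/8) (\<gamma>^2/2) * y^2 \<le> (\<beta>^2/8) * y^2" by (intro mult_right_mono) auto
  have m2: "min (\<beta>^2/8) (\<gamma>^2/2) * x^4 \<le> (\<gamma>^2/2) * x^4" by (intro mult_right_mono) auto
  have "min (\<beta>^2/8) (\<gamma>^2/2) * (y^2 + x^4) = min (\<beta>^2/8) (\<gamma>^2/2) * y^2 + min (\<beta>^2/8) (\<gamma>^2/2) * x^4"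
    by (simp add: algebra_simps)
  thus ?thesis using main m1 m2 unfolding w_def by linarith
qed

lemma H2_zero_scaleR: "q \<in> H 2 \<Longrightarrow> q a = 0 \<Longrightarrow> q (t *\<^sub>R a) = 0"
  using H_homogeneous[of q 2 t a] by simp

lemma H2_in_chart_at_zero:
  assumes q: "q \<in> H 2" and z: "q s = 0" and t: "(A::real^3^3) *v e 3 = t *\<^sub>R s"
  shows "q (A *v vector [x, y, 1]) = t * (grad q s \<bullet> (A *v e 1)) * x + t * (grad q s \<bullet> (A *v e 2)) * y
    + (q (A *v e 1) * x^2 + (grad q (A *v e 1) \<bullet> (A *v e 2)) * x * y + q (A *v e 2) * y^2)"
  unfolding H2_in_chart[OF q] t grad_H2_scaleR[OF q] H2_zero_scaleR[OF q z] by (simp add: algebra_simps)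

lemma orthogonal_matrix_columns_eq_0:
  assumes inv: "invertible (A::real^3^3)"
    and "g \<bullet> (A *v e 1) = 0" "g \<bullet> (A *v e 2) = 0" "g \<bullet> (A *v e 3) = 0"
  shows "g = 0"
proof -
  obtain Ai where Ai: "\<And>v. A *v (Ai *v v) = v" using invertible_matrix_inverse[OF inv] by blast
  have "g \<bullet> (A *v (Ai *v g)) = 0"
    by (subst matrix_vector_axis_decomp) (simp add: inner_add_right assms(2-4))
  thus ?thesis using Ai by simp
qed

lemma independent_gradients_chart_det_nonzero:
  assumes inv: "invertible (A::real^3^3)" and g3: "ga \<bullet> (A *v e 3) = 0" "gb \<bullet> (A *v e 3) = 0"
    and ind: "\<forall>\<mu> \<nu>. \<mu> *\<^sub>R ga + \<nu> *\<^sub>R gb = 0 \<longrightarrow> \<mu> = 0 \<and> \<nu> = 0"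
  shows "(ga \<bullet> (A *v e 1)) * (gb \<bullet> (A *v e 2)) - (ga \<bullet> (A *v e 2)) * (gb \<bullet> (A *v e 1)) \<noteq> 0"
proof
  define a1 a2 b1 b2 where "a1 = ga \<bullet> (A *v e 1)" "a2 = ga \<bullet> (A *v e 2)"
    "b1 = gb \<bullet> (A *v e 1)" "b2 = gb \<bullet> (A *v e 2)"
  assume "(ga \<bullet> (A *v e 1)) * (gb \<bullet> (A *v e 2)) - (ga \<bullet> (A *v e 2)) * (gb \<bullet> (A *v e 1)) = 0"
  hence D0: "a1 * b2 - a2 * b1 = 0" unfolding a1_a2_b1_b2_def .
  obtain \<mu> \<nu> where mn: "\<mu> \<noteq> 0 \<or> \<nu> \<noteq> 0" "\<mu> * a1 + \<nu> * b1 = 0" "\<mu> * a2 + \<nu> * b2 = 0"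
  proof (cases "b1 \<noteq> 0 \<or> a1 \<noteq> 0")
    case True
    thus ?thesis using D0 that[of b1 "-a1"] by (auto simp: algebra_simps)
  next
    case False
    thus ?thesis using that[of b2 "-a2"] that[of 1 0] by (cases "b2 \<noteq> 0 \<or> a2 \<noteq> 0") (auto simp: algebra_simps)
  qed
  have "\<mu> *\<^sub>R ga + \<nu> *\<^sub>R gb = 0"
    using mn g3 unfolding a1_a2_b1_b2_def
    by (intro orthogonal_matrix_columns_eq_0[OF inv]) (simp_all add: inner_add_left)
  thus False using ind mn by blast
qed

lemma sum_squares_lower_bound_nondegenerate:
  fixes a1 a2 b1 b2 N :: real and Ra Rb :: "real \<Rightarrow> real \<Rightarrow> real"
  assumes D: "a1 * b2 - a2 * b1 \<noteq> 0" and N0: "N \<ge> 0"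
    and Ra: "\<And>x y. \<bar>Ra x y\<bar> \<le> N * (x^2 + y^2)" and Rb: "\<And>x y. \<bar>Rb x y\<bar> \<le> N * (x^2 + y^2)"
  shows "\<exists>c>0. \<exists>\<delta>>0. \<forall>x y. \<bar>x\<bar> \<le> \<delta> \<longrightarrow> \<bar>y\<bar> \<le> \<delta> \<longrightarrow>
     c * (x^2 + y^2) \<le> (a1 * x + a2 * y + Ra x y)^2 + (b1 * x + b2 * y + Rb x y)^2"
proof -
  define K where "K = 2 * (a1^2 + a2^2 + b1^2 + b2^2) / (a1 * b2 - a2 * b1)^2"
  have "a1^2 + a2^2 + b1^2 + b2^2 > 0"
    using D by (smt (verit, best) mult_eq_0_iff power2_less_eq_zero_iff zero_le_power2)
  hence Kpos: "K > 0" unfolding K_def using D by simp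
  define \<delta> where "\<delta> = min 1 (1 / (16 * K * (N^2 + 1)))"
  have kn: "K * (N^2 + 1) > 0" using Kpos by (simp add: add_nonneg_pos)
  hence dpos: "\<delta> > 0" unfolding \<delta>_def by simp
  have "1/(4*K) * (x^2 + y^2) \<le> (a1 * x + a2 * y + Ra x y)^2 + (b1 * x + b2 * y + Rb x y)^2"
    if x: "\<bar>x\<bar> \<le> \<delta>" and y: "\<bar>y\<bar> \<le> \<delta>" for x y
  proof -
    define r where "r = x^2 + y^2"
    have r0: "r \<ge> 0" unfolding r_def by simp
    have rK: "r \<le> K * ((a1 * x + a2 * y)^2 + (b1 * x + b2 * y)^2)"
      unfolding r_def K_def by (rule sum_squares_le_linear_image[OF D])
    have small: "N^2 * r \<le> 1 / (8 * K)"
    proof -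
      have d1: "\<delta> \<le> 1" "\<delta> \<le> 1 / (16 * K * (N^2 + 1))" unfolding \<delta>_def by auto
      have "x^2 \<le> \<delta>^2" "y^2 \<le> \<delta>^2" using x y by (metis abs_le_square_iff abs_of_pos dpos)+
      moreover have "\<delta>^2 \<le> \<delta>" using d1 dpos by (simp add: power2_eq_square mult_le_cancel_right1)
      ultimately have "r \<le> 2 * \<delta>" unfolding r_def by linarith
      hence "N^2 * r \<le> (N^2 + 1) * (2 * \<delta>)" using r0 by (intro mult_mono) auto
      also have "\<dots> \<le> (N^2 + 1) * (2 * (1 / (16 * K * (N^2 + 1))))"
        using d1 by (intro mult_left_mono) auto
      also have "\<dots> = 1 / (8 * K)" using Kpos kn by (simp add: field_simps)
      finally show ?thesis .
    qed
    have "r / (4*K) \<le> ((a1 * x + a2 * y) + Ra x y)^2 + ((b1 * x + b2 * y) + Rb x y)^2"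
      by (rule perturbed_sum_squares_lower_bound[OF Kpos r0 rK _ _ N0 small])
        (use Ra Rb in \<open>simp_all add: r_def\<close>)
    thus ?thesis unfolding r_def by simp
  qed
  moreover have "1/(4*K) > 0" using Kpos by simp
  ultimately show ?thesis using dpos by blast
qed

lemma sum_squares_lower_bound_point:
  assumes qa: "qa \<in> H 2" and qb: "qb \<in> H 2" and ch: "chart s A" and za: "qa s = 0" and zb: "qb s = 0"
    and ind: "\<forall>\<mu> \<nu>. \<mu> *\<^sub>R grad qa s + \<nu> *\<^sub>R grad qb s = 0 \<longrightarrow> \<mu> = 0 \<and> \<nu> = 0"
  shows "\<exists>c>0. \<exists>\<delta>>0. \<forall>x y. \<bar>x\<bar> \<le> \<delta> \<longrightarrow> \<bar>y\<bar> \<le> \<delta> \<longrightarrow>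
     c * (x^2 + y^2) \<le> (qa (A *v vector [x, y, 1]))^2 + (qb (A *v vector [x, y, 1]))^2"
proof -
  obtain t where t: "t \<noteq> 0" "A *v e 3 = t *\<^sub>R s" using chart_origin[OF ch] by auto
  have inv: "invertible A" using ch unfolding chart_def by simp
  define E1 E2 where "E1 = A *v e 1" and "E2 = A *v e 2"
  define a1 a2 b1 b2 where "a1 = t * (grad qa s \<bullet> E1)" and "a2 = t * (grad qa s \<bullet> E2)"
    and "b1 = t * (grad qb s \<bullet> E1)" and "b2 = t * (grad qb s \<bullet> E2)"
  define Ra Rb where "Ra = (\<lambda>x y. qa E1 * x^2 + (grad qa E1 \<bullet> E2) * x * y + qa E2 * y^2)"
    and "Rb = (\<lambda>x y. qb E1 * x^2 + (grad qb E1 \<bullet> E2) * x * y + qb E2 * y^2)"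
  define N where "N = (\<bar>qa E1\<bar> + \<bar>grad qa E1 \<bullet> E2\<bar> + \<bar>qa E2\<bar>) + (\<bar>qb E1\<bar> + \<bar>grad qb E1 \<bullet> E2\<bar> + \<bar>qb E2\<bar>)"
  have "(grad qa s \<bullet> E1) * (grad qb s \<bullet> E2) - (grad qa s \<bullet> E2) * (grad qb s \<bullet> E1) \<noteq> 0"
    unfolding E1_def E2_def using t(2) H2_Euler[OF qa] H2_Euler[OF qb] za zb
    by (intro independent_gradients_chart_det_nonzero[OF inv _ _ ind]) simp_all
  hence D: "a1 * b2 - a2 * b1 \<noteq> 0" unfolding a1_def a2_def b1_def b2_def using t(1) by (simp add: algebra_simps)
  have N0: "N \<ge> 0" unfolding N_def by simp
  have "\<bar>Ra x y\<bar> \<le> N * (x^2 + y^2)" "\<bar>Rb x y\<bar> \<le> N * (x^2 + y^2)" for x y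
    unfolding Ra_def Rb_def N_def
    by (rule order_trans[OF abs_quadratic_le_sum_squares mult_right_mono], simp_all)+
  from sum_squares_lower_bound_nondegenerate[OF D N0 this] obtain c \<delta> where "c > 0" "\<delta> > 0"
    and lb: "\<forall>x y. \<bar>x\<bar> \<le> \<delta> \<longrightarrow> \<bar>y\<bar> \<le> \<delta> \<longrightarrow>
      c * (x^2 + y^2) \<le> (a1 * x + a2 * y + Ra x y)^2 + (b1 * x + b2 * y + Rb x y)^2"
    by blast
  moreover have "qa (A *v vector [x, y, 1]) = a1 * x + a2 * y + Ra x y"
    and "qb (A *v vector [x, y, 1]) = b1 * x + b2 * y + Rb x y" for x y
    unfolding a1_def a2_def b1_def b2_def Ra_def Rb_def E1_def E2_def
    by (simp_all add: H2_in_chart_at_zero[OF qa za t(2)] H2_in_chart_at_zero[OF qb zb t(2)])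
  ultimately show ?thesis by auto
qed

lemma square_sub_mult_add_le: "(a - \<rho> * b)^2 + b^2 \<le> (2 + 2 * \<rho>^2) * (a^2 + (b::real)^2)"
proof -
  have "0 \<le> (a + \<rho> * b)^2 + 2 * \<rho>^2 * a^2 + b^2" by simp
  thus ?thesis by (simp add: power2_eq_square algebra_simps)
qed

lemma weighted_sum_squares_lower_bound_near_0:
  fixes \<beta> \<gamma> \<sigma> \<tau> dd ee :: real
  assumes bnz: "\<beta> \<noteq> 0" and gnz: "\<gamma> \<noteq> 0"
  shows "\<exists>c>0. \<exists>\<delta>>0. \<forall>x y. \<bar>x\<bar> \<le> \<delta> \<longrightarrow> \<bar>y\<bar> \<le> \<delta> \<longrightarrow>
     c * (y^2 + x^4) \<le> (y * (\<beta> + \<sigma> * x + \<tau> * y))^2 + (\<gamma> * x^2 + y * (dd * x + ee * y))^2"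
proof -
  define d0 where "d0 = min 1 (min (\<bar>\<beta>\<bar> / (2 * (\<bar>\<sigma>\<bar> + \<bar>\<tau>\<bar> + 1))) (\<bar>\<beta>\<bar> / (3 * (\<bar>dd\<bar> + \<bar>ee\<bar> + 1))))"
  have p1: "\<bar>\<sigma>\<bar> + \<bar>\<tau>\<bar> + 1 > 0" "\<bar>dd\<bar> + \<bar>ee\<bar> + 1 > 0" by (simp_all add: add_nonneg_pos)
  have d0pos: "d0 > 0" unfolding d0_def using bnz p1 by simp
  have d0a: "d0 \<le> \<bar>\<beta>\<bar> / (2 * (\<bar>\<sigma>\<bar> + \<bar>\<tau>\<bar> + 1))" and d0b: "d0 \<le> \<bar>\<beta>\<bar> / (3 * (\<bar>dd\<bar> + \<bar>ee\<bar> + 1))"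
    unfolding d0_def by (meson min.cobounded1 min.cobounded2 order_trans)+
  have s1: "2 * ((\<bar>\<sigma>\<bar> + \<bar>\<tau>\<bar>) * d0) \<le> \<bar>\<beta>\<bar>"
  proof -
    have "(\<bar>\<sigma>\<bar> + \<bar>\<tau>\<bar>) * d0 \<le> (\<bar>\<sigma>\<bar> + \<bar>\<tau>\<bar> + 1) * d0" using d0pos by (intro mult_right_mono) auto
    also have "\<dots> \<le> (\<bar>\<sigma>\<bar> + \<bar>\<tau>\<bar> + 1) * (\<bar>\<beta>\<bar> / (2 * (\<bar>\<sigma>\<bar> + \<bar>\<tau>\<bar> + 1)))"
      using d0a p1 by (intro mult_left_mono) auto
    also have "\<dots> = \<bar>\<beta>\<bar> / 2" using p1 by (simp add: field_simps)
    finally show ?thesis by simp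
  qed
  have s2: "8 * ((\<bar>dd\<bar> + \<bar>ee\<bar>) * d0)^2 \<le> \<beta>^2"
  proof -
    have "(\<bar>dd\<bar> + \<bar>ee\<bar>) * d0 \<le> (\<bar>dd\<bar> + \<bar>ee\<bar> + 1) * d0" using d0pos by (intro mult_right_mono) auto
    also have "\<dots> \<le> (\<bar>dd\<bar> + \<bar>ee\<bar> + 1) * (\<bar>\<beta>\<bar> / (3 * (\<bar>dd\<bar> + \<bar>ee\<bar> + 1)))"
      using d0b p1 by (intro mult_left_mono) auto
    also have "\<dots> = \<bar>\<beta>\<bar> / 3" using p1 by (simp add: field_simps)
    finally have "((\<bar>dd\<bar> + \<bar>ee\<bar>) * d0)^2 \<le> (\<bar>\<beta>\<bar> / 3)^2" using d0pos by (intro power_mono) auto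
    moreover have "(\<bar>\<beta>\<bar> / 3)^2 = \<beta>^2 / 9" by (simp add: power_divide)
    ultimately show ?thesis using zero_le_power2[of \<beta>] by linarith
  qed
  have "min (\<beta>^2/8) (\<gamma>^2/2) > 0" using bnz gnz by simp
  thus ?thesis using weighted_sum_squares_lower_bound[OF _ _ s1 s2] d0pos by blast
qed

lemma sum_squares_lower_bound_line_point:
  assumes qa: "qa \<in> H 2" and qb: "qb \<in> H 2" and ch: "chart p A" and za: "qa p = 0" and zb: "qb p = 0"
    and ga0: "grad qa p \<noteq> 0" and ga1: "grad qa p \<bullet> (A *v e 1) = 0"
    and gb0: "grad qb p = 0" and gam: "qb (A *v e 1) \<noteq> 0"
  shows "\<exists>c>0. \<exists>\<delta>>0. \<forall>x y. \<bar>x\<bar> \<le> \<delta> \<longrightarrow> \<bar>y\<bar> \<le> \<delta> \<longrightarrow>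
     c * (y^2 + x^4) \<le> (qa (A *v vector [x, y, 1]))^2 + (qb (A *v vector [x, y, 1]))^2"
proof -
  obtain t where t: "t \<noteq> 0" "A *v e 3 = t *\<^sub>R p" using chart_origin[OF ch] by auto
  have inv: "invertible A" using ch unfolding chart_def by simp
  define E1 E2 where "E1 = A *v e 1" and "E2 = A *v e 2"
  define \<beta> \<gamma> dd ee where "\<beta> = t * (grad qa p \<bullet> E2)" and "\<gamma> = qb E1"
    and "dd = grad qb E1 \<bullet> E2" and "ee = qb E2"
  \<comment> \<open>Subtracting \<open>\<rho> * qb\<close> cancels the \<open>x\<^sup>2\<close> term of \<open>qa\<close>; the rest is divisible by \<open>y\<close>.\<close>
  define \<rho> \<sigma> \<tau> where "\<rho> = qa E1 / \<gamma>" and "\<sigma> = (grad qa E1 \<bullet> E2) - \<rho> * dd" and "\<tau> = qa E2 - \<rho> * ee"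
  have gnz: "\<gamma> \<noteq> 0" unfolding \<gamma>_def E1_def using gam .
  have bnz: "\<beta> \<noteq> 0"
  proof
    assume "\<beta> = 0"
    hence "grad qa p \<bullet> (A *v e 2) = 0" using t unfolding \<beta>_def E2_def by simp
    moreover have "grad qa p \<bullet> (A *v e 3) = 0" unfolding t(2) using H2_Euler[OF qa] za by simp
    ultimately show False using orthogonal_matrix_columns_eq_0[OF inv ga1] ga0 by simp
  qed
  have Qb: "qb (A *v vector [x, y, 1]) = \<gamma> * x^2 + y * (dd * x + ee * y)" for x y
    unfolding H2_in_chart_at_zero[OF qb zb t(2)] \<gamma>_def dd_def ee_def E1_def E2_def gb0
    by (simp add: algebra_simps power2_eq_square)
  have Qa: "qa (A *v vector [x, y, 1]) - \<rho> * qb (A *v vector [x, y, 1]) = y * (\<beta> + \<sigma> * x + \<tau> * y)" for x y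
    unfolding H2_in_chart_at_zero[OF qa za t(2)] Qb \<sigma>_def \<tau>_def \<rho>_def \<beta>_def E1_def E2_def
    using gnz ga1 by (simp add: field_simps power2_eq_square)
  obtain c \<delta> where c: "c > 0" "\<delta> > 0" and lb: "\<forall>x y. \<bar>x\<bar> \<le> \<delta> \<longrightarrow> \<bar>y\<bar> \<le> \<delta> \<longrightarrow>
     c * (y^2 + x^4) \<le> (y * (\<beta> + \<sigma> * x + \<tau> * y))^2 + (\<gamma> * x^2 + y * (dd * x + ee * y))^2"
    using weighted_sum_squares_lower_bound_near_0[OF bnz gnz] by blast
  have rp: "2 + 2 * \<rho>^2 > 0" by (simp add: add_pos_nonneg)
  have "c / (2 + 2 * \<rho>^2) * (y^2 + x^4) \<le> (qa (A *v vector [x, y, 1]))^2 + (qb (A *v vector [x, y, 1]))^2"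
    if "\<bar>x\<bar> \<le> \<delta>" "\<bar>y\<bar> \<le> \<delta>" for x y
  proof -
    have "c * (y^2 + x^4) \<le> (y * (\<beta> + \<sigma> * x + \<tau> * y))^2 + (\<gamma> * x^2 + y * (dd * x + ee * y))^2"
      using lb that by blast
    also have "\<dots> = (qa (A *v vector [x, y, 1]) - \<rho> * qb (A *v vector [x, y, 1]))^2 + (qb (A *v vector [x, y, 1]))^2"
      by (simp only: Qa[symmetric] Qb)
    also have "\<dots> \<le> (2 + 2 * \<rho>^2) * ((qa (A *v vector [x, y, 1]))^2 + (qb (A *v vector [x, y, 1]))^2)"
      by (rule square_sub_mult_add_le)
    finally show ?thesis using rp by (simp add: field_simps)
  qed
  moreover have "c / (2 + 2 * \<rho>^2) > 0" using c rp by simp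
  ultimately show ?thesis using c by blast
qed

section \<open>From local to global domination\<close>

lemma compact_locally_dominated:
  fixes h f :: "'a::topological_space \<Rightarrow> real"
  assumes S: "compact S" and nn: "\<forall>w\<in>S. f w \<ge> 0"
    and loc: "\<And>v. v \<in> S \<Longrightarrow> \<exists>U C. open U \<and> v \<in> U \<and> (\<forall>w\<in>U \<inter> S. \<bar>h w\<bar> \<le> C * f w)"
  shows "\<exists>C. \<forall>w\<in>S. \<bar>h w\<bar> \<le> C * f w"
proof -
  have "\<forall>v\<in>S. \<exists>U C. open U \<and> v \<in> U \<and> (\<forall>w\<in>U \<inter> S. \<bar>h w\<bar> \<le> C * f w)" using loc by blast
  then obtain U C where UC: "\<And>v. v \<in> S \<Longrightarrow> open (U v) \<and> v \<in> U v \<and> (\<forall>w\<in>U v \<inter> S. \<bar>h w\<bar> \<le> C v * f w)"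
    by metis
  obtain T where T: "T \<subseteq> S" "finite T" "S \<subseteq> (\<Union>c\<in>T. U c)"
    using compactE_image[OF S, of S U] UC by blast
  have "\<bar>h w\<bar> \<le> (\<Sum>c\<in>T. max (C c) 0) * f w" if w: "w \<in> S" for w
  proof -
    obtain c where c: "c \<in> T" "w \<in> U c" using T w by blast
    have "\<bar>h w\<bar> \<le> C c * f w" using UC[of c] c T w by blast
    also have "\<dots> \<le> max (C c) 0 * f w" using nn w by (intro mult_right_mono) auto
    also have "\<dots> \<le> (\<Sum>c\<in>T. max (C c) 0) * f w"
      using nn w c T by (intro mult_right_mono member_le_sum) auto
    finally show ?thesis .
  qed
  thus ?thesis by blast
qed

lemma locally_dominated_where_positive:
  fixes h f :: "'a::topological_space \<Rightarrow> real"
  assumes f: "continuous_on UNIV f" and fv: "f v > 0" and M: "\<forall>w\<in>S. \<bar>h w\<bar> \<le> M"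
  shows "\<exists>U C. open U \<and> v \<in> U \<and> (\<forall>w\<in>U \<inter> S. \<bar>h w\<bar> \<le> C * f w)"
proof (intro exI conjI ballI)
  show "open {w. f v / 2 < f w}" by (rule open_Collect_less) (auto intro: continuous_intros f)
  show "v \<in> {w. f v / 2 < f w}" using fv by simp
  fix w assume w: "w \<in> {w. f v / 2 < f w} \<inter> S"
  hence hw: "\<bar>h w\<bar> \<le> M" and M0: "M \<ge> 0" using M by force+
  have "f v \<le> 2 * f w" using w by simp
  hence "M * f v \<le> M * (2 * f w)" using M0 by (rule mult_left_mono)
  hence "M \<le> 2 * M / f v * f w" using fv by (simp add: field_simps)
  thus "\<bar>h w\<bar> \<le> 2 * M / f v * f w" using hw by linarith
qed

lemma dominated_if_locally_dominated:
  fixes h f :: "real^3 \<Rightarrow> real"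
  assumes h: "h \<in> H 4" and f: "f \<in> H 4" and nn: "\<forall>v. f v \<ge> 0"
    and loc: "\<And>v. v \<noteq> 0 \<Longrightarrow> f v = 0 \<Longrightarrow> \<exists>U C. open U \<and> v \<in> U \<and> (\<forall>w\<in>U. \<bar>h w\<bar> \<le> C * f w)"
  shows "\<exists>C. \<forall>v. \<bar>h v\<bar> \<le> C * f v"
proof -
  define S where "S = sphere (0::real^3) 1"
  have cS: "compact S" and "e 1 \<in> S" unfolding S_def by simp_all
  moreover have "continuous_on S (\<lambda>v. \<bar>h v\<bar>)"
    using continuous_on_H[OF h] by (auto intro: continuous_intros continuous_on_subset)
  ultimately obtain v0 where M: "\<forall>w\<in>S. \<bar>h w\<bar> \<le> \<bar>h v0\<bar>"
    using continuous_attains_sup[OF cS] by blast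
  have "\<exists>U C. open U \<and> v \<in> U \<and> (\<forall>w\<in>U \<inter> S. \<bar>h w\<bar> \<le> C * f w)" if "v \<in> S" for v
  proof (cases "f v = 0")
    case True
    moreover have "v \<noteq> 0" using that unfolding S_def by auto
    ultimately show ?thesis using loc[of v] by blast
  next
    case False
    hence "f v > 0" using nn by (simp add: order_less_le)
    thus ?thesis by (rule locally_dominated_where_positive[OF continuous_on_H[OF f] _ M])
  qed
  moreover have "\<forall>w\<in>S. f w \<ge> 0" using nn by blast
  ultimately obtain C where onS: "\<forall>w\<in>S. \<bar>h w\<bar> \<le> C * f w"
    using compact_locally_dominated[OF cS] by blast
  have "\<bar>h v\<bar> \<le> C * f v" for v
  proof (cases "v = 0")
    case True
    thus ?thesis using H_homogeneous[OF h, of 0 0] H_homogeneous[OF f, of 0 0] by simp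
  next
    case False
    define w where "w = (1 / norm v) *\<^sub>R v"
    have wS: "w \<in> S" and vw: "v = norm v *\<^sub>R w" unfolding S_def w_def using False by simp_all
    have "\<bar>h v\<bar> = norm v ^ 4 * \<bar>h w\<bar>" by (subst vw, simp add: H_homogeneous[OF h] abs_mult)
    also have "\<dots> \<le> norm v ^ 4 * (C * f w)" using onS wS by (intro mult_left_mono) auto
    also have "\<dots> = C * f v" by (subst (2) vw, simp add: H_homogeneous[OF f])
    finally show ?thesis .
  qed
  thus ?thesis by blast
qed

lemma chart_neighbourhood_domination:
  fixes h f :: "real^3 \<Rightarrow> real"
  assumes h: "h \<in> H 4" and f: "f \<in> H 4" and inv: "invertible (A::real^3^3)" and lam: "lam \<noteq> 0"
  and d: "\<delta> > 0" and bd: "\<forall>x y. \<bar>x\<bar> \<le> \<delta> \<longrightarrow> \<bar>y\<bar> \<le> \<delta> \<longrightarrow> \<bar>h (A *v vector [x, y, 1])\<bar> \<le> C * f (A *v vector [x, y, 1])"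
  shows "\<exists>U. open U \<and> lam *\<^sub>R (A *v e 3) \<in> U \<and> (\<forall>w\<in>U. \<bar>h w\<bar> \<le> C * f w)"
proof -
  obtain Ai where Ai: "\<And>v. A *v (Ai *v v) = v" "\<And>v. Ai *v (A *v v) = v" using invertible_matrix_inverse[OF inv] by blast
  define U where "U = {w. \<bar>(Ai *v w)$3 - lam\<bar> < \<bar>lam\<bar>/2} \<inter> {w. \<bar>(Ai *v w)$1\<bar> < \<delta> * \<bar>lam\<bar>/2} \<inter> {w. \<bar>(Ai *v w)$2\<bar> < \<delta> * \<bar>lam\<bar>/2}"
  have cont: "continuous_on UNIV (\<lambda>w. (Ai *v w)$i)" for i
    by (intro linear_continuous_on bounded_linear_compose[OF bounded_linear_vec_nth]) (rule matrix_vector_mul_bounded_linear)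
  have oU: "open U" unfolding U_def
    by (intro open_Int open_Collect_less continuous_intros cont)
  have zU: "lam *\<^sub>R (A *v e 3) \<in> U"
  proof -
    have "Ai *v (lam *\<^sub>R (A *v e 3)) = lam *\<^sub>R e 3" by (simp add: matrix_vector_mult_scaleR Ai)
    thus ?thesis unfolding U_def using lam d by (simp add: axis_def)
  qed
  have "\<bar>h w\<bar> \<le> C * f w" if wU: "w \<in> U" for w
  proof -
    define u where "u = Ai *v w"
    have u3: "\<bar>u$3 - lam\<bar> < \<bar>lam\<bar>/2" and u1: "\<bar>u$1\<bar> < \<delta> * \<bar>lam\<bar>/2" and u2: "\<bar>u$2\<bar> < \<delta> * \<bar>lam\<bar>/2"
      using wU unfolding U_def u_def by auto
    have u3b: "\<bar>u$3\<bar> > \<bar>lam\<bar>/2" using u3 by linarith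
    hence u3nz: "u$3 \<noteq> 0" using lam by auto
    have "\<delta> * (\<bar>lam\<bar> / 2) \<le> \<delta> * \<bar>u$3\<bar>" using u3b d by (intro mult_left_mono) auto
    hence small: "\<bar>u$i / u$3\<bar> \<le> \<delta>" if "\<bar>u$i\<bar> < \<delta> * \<bar>lam\<bar>/2" for i
      using that u3nz by (simp add: abs_divide divide_le_eq)
    define x y where "x = u$1 / u$3" and "y = u$2 / u$3"
    have xb: "\<bar>x\<bar> \<le> \<delta>" and yb: "\<bar>y\<bar> \<le> \<delta>" unfolding x_def y_def using small u1 u2 by auto
    have uu: "u = u$3 *\<^sub>R vector [x, y, 1]"
      unfolding x_def y_def using u3nz by (simp add: vec_eq_iff forall_3)
    have ww: "w = u$3 *\<^sub>R (A *v vector [x, y, 1])"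
      by (metis Ai(1) matrix_vector_mult_scaleR u_def uu)
    have "\<bar>h w\<bar> = (u$3)^4 * \<bar>h (A *v vector [x, y, 1])\<bar>" unfolding ww H_homogeneous[OF h] by (simp add: abs_mult)
    also have "\<dots> \<le> (u$3)^4 * (C * f (A *v vector [x, y, 1]))" using bd xb yb by (intro mult_left_mono) auto
    also have "\<dots> = C * f w" unfolding ww H_homogeneous[OF f] by simp
    finally show ?thesis .
  qed
  thus ?thesis using oU zU by blast
qed

lemma dim_2_independent_pair: fixes G :: "(real^3) set" assumes "dim G = 2"
  shows "\<exists>g1\<in>G. \<exists>g2\<in>G. \<forall>\<mu> \<nu>. \<mu> *\<^sub>R g1 + \<nu> *\<^sub>R g2 = 0 \<longrightarrow> \<mu> = 0 \<and> \<nu> = 0"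
proof -
  obtain B where B: "B \<subseteq> G" "independent B" "card B = 2" using basis_exists[of G] assms by metis
  then obtain g1 g2 where g: "B = {g1, g2}" "g1 \<noteq> g2" by (meson card_2_iff)
  have "\<forall>\<mu> \<nu>. \<mu> *\<^sub>R g1 + \<nu> *\<^sub>R g2 = 0 \<longrightarrow> \<mu> = 0 \<and> \<nu> = 0"
  proof (intro allI impI)
    fix \<mu> \<nu> assume eq: "\<mu> *\<^sub>R g1 + \<nu> *\<^sub>R g2 = 0"
    show "\<mu> = 0 \<and> \<nu> = 0"
    proof (rule ccontr)
      assume nz: "\<not> (\<mu> = 0 \<and> \<nu> = 0)"
      have "dependent B"
      proof (cases "\<mu> = 0")
        case False
        have m1: "\<mu> *\<^sub>R g1 = - (\<nu> *\<^sub>R g2)" using eq by (simp add: eq_neg_iff_add_eq_0)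
        have "g1 = (1/\<mu>) *\<^sub>R (\<mu> *\<^sub>R g1)" using False by simp
        also have "\<dots> = (- \<nu> / \<mu>) *\<^sub>R g2" unfolding m1 by simp
        finally have "g1 \<in> span {g2}" by (metis span_base span_scale singletonI)
        moreover have "B - {g1} = {g2}" using g by auto
        ultimately show ?thesis unfolding dependent_def using g by auto
      next
        case True
        hence "\<nu> \<noteq> 0" using nz by simp
        hence "g2 = 0" using eq True by simp
        thus ?thesis using g by (simp add: dependent_zero)
      qed
      thus False using B(2) by simp
    qed
  qed
  thus ?thesis using B(1) g by auto
qed

lemma grad_orthogonal_line: assumes q: "q \<in> H 2" and zp: "q p = 0" and F: "(\<lambda>v. (q v)^2) \<in> Fpl p nv"
  shows "\<forall>w. nv \<bullet> w = 0 \<longrightarrow> grad q p \<bullet> w = 0"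
proof -
  obtain B c where chB: "chart_line p nv B" and rep: "local_rep 4 (\<lambda>v. (q v)^2) B c" and c20: "c 2 0 = 0"
    using F unfolding Fpl_def by blast
  obtain t where t: "t \<noteq> 0" "B *v e 3 = t *\<^sub>R p" using chart_origin[OF chart_line_chart[OF chB]] by auto
  define a where "a = t * (grad q p \<bullet> (B *v e 1))"
  define b where "b = q (B *v e 1)"
  have Q: "q (B *v vector [x, 0, 1]) = a * x + b * x^2" for x
    unfolding H2_in_chart[OF q] t(2) grad_H2_scaleR[OF q] H2_zero_scaleR[OF q zp] a_def b_def
    by (simp add: algebra_simps)
  have "\<forall>x::real. (\<Sum>i\<le>4. c i 0 * x^i) = (\<Sum>i\<le>4. (if i = 2 then a^2 else if i = 3 then 2*a*b else if i = 4 then b^2 else 0) * x^i)"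
  proof
    fix x :: real
    have "(\<Sum>i\<le>4. c i 0 * x^i) = (q (B *v vector [x, 0, 1]))^2"
      using rep unfolding local_rep_def by (simp add: triangle_sum_at_y0)
    also have "\<dots> = (\<Sum>i\<le>4. (if i = 2 then a^2 else if i = 3 then 2*a*b else if i = 4 then b^2 else 0) * x^i)"
      unfolding Q by (simp only: sum_atMost_4_expand) (simp add: power2_eq_square power3_eq_cube power4_eq_xxxx algebra_simps)
    finally show "(\<Sum>i\<le>4. c i 0 * x^i) = \<dots>" .
  qed
  from real_poly_sum_coeffs_eq[OF this, rule_format, of 2] have "c 2 0 = a^2" by simp
  hence a0: "a = 0" using c20 by simp
  hence g1: "grad q p \<bullet> (B *v e 1) = 0" unfolding a_def using t by simp
  have g3: "grad q p \<bullet> (B *v e 3) = 0" unfolding t(2) using H2_Euler[OF q] zp by simp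
  obtain Bi where Bi: "\<And>v. B *v (Bi *v v) = v" using invertible_matrix_inverse chB unfolding chart_line_def chart_def by blast
  obtain mu where mu: "mu \<noteq> 0" "\<And>u. nv \<bullet> (B *v u) = mu * u$2" using chart_line_normal[OF chB] by auto
  show ?thesis
  proof (intro allI impI)
    fix w assume w: "nv \<bullet> w = 0"
    define u where "u = Bi *v w"
    have wu: "w = B *v u" unfolding u_def Bi ..
    have "mu * u$2 = 0" using w mu(2)[of u] unfolding wu[symmetric] by simp
    hence u2: "u$2 = 0" using mu(1) by simp
    show "grad q p \<bullet> w = 0"
      unfolding wu by (subst matrix_vector_axis_decomp) (simp add: inner_add_right g1 g3 u2)
  qed
qed

lemma grad_ord_ge2_eq_0: assumes q: "q \<in> H 2" and o: "ord_ge2 2 p q" shows "grad q p = 0"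
proof -
  obtain B c where ch: "chart p B" and rep: "local_rep 2 q B c" and z: "c 0 0 = 0" "c 1 0 = 0" "c 0 1 = 0"
    using o unfolding ord_ge2_def by blast
  obtain t where t: "t \<noteq> 0" "B *v e 3 = t *\<^sub>R p" using chart_origin[OF ch] by auto
  have inv: "invertible B" using ch unfolding chart_def by simp
  define g where "g = grad q (B *v e 3)"
  have "\<forall>x::real. (\<Sum>i\<le>2. c i 0 * x^i) = (\<Sum>i\<le>2. (if i = 0 then q (B *v e 3) else if i = 1 then g \<bullet> (B *v e 1) else q (B *v e 1)) * x^i)"
  proof
    fix x :: real
    have "(\<Sum>i\<le>2. c i 0 * x^i) = q (B *v vector [x, 0, 1])"
      using rep unfolding local_rep_def by (simp add: triangle_sum_at_y0)
    also have "\<dots> = (\<Sum>i\<le>2. (if i = 0 then q (B *v e 3) else if i = 1 then g \<bullet> (B *v e 1) else q (B *v e 1)) * x^i)"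
      unfolding H2_in_chart[OF q] g_def by (simp only: sum_atMost_2_expand) (simp add: algebra_simps)
    finally show "(\<Sum>i\<le>2. c i 0 * x^i) = \<dots>" .
  qed
  note hx = real_poly_sum_coeffs_eq[OF this, rule_format]
  have q0: "q (B *v e 3) = 0" using hx[of 0] z by simp
  have g1: "g \<bullet> (B *v e 1) = 0" using hx[of 1] z by simp
  have "\<forall>y::real. (\<Sum>j\<le>2. c 0 j * y^j) = (\<Sum>j\<le>2. (if j = 0 then q (B *v e 3) else if j = 1 then g \<bullet> (B *v e 2) else q (B *v e 2)) * y^j)"
  proof
    fix y :: real
    have "(\<Sum>j\<le>2. c 0 j * y^j) = q (B *v vector [0, y, 1])"
      using rep unfolding local_rep_def by (simp add: triangle_sum_at_x0)
    also have "\<dots> = (\<Sum>j\<le>2. (if j = 0 then q (B *v e 3) else if j = 1 then g \<bullet> (B *v e 2) else q (B *v e 2)) * y^j)"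
      unfolding H2_in_chart[OF q] g_def by (simp only: sum_atMost_2_expand) (simp add: algebra_simps)
    finally show "(\<Sum>j\<le>2. c 0 j * y^j) = \<dots>" .
  qed
  note hy = real_poly_sum_coeffs_eq[OF this, rule_format]
  have g2: "g \<bullet> (B *v e 2) = 0" using hy[of 1] z by simp
  have g3: "g \<bullet> (B *v e 3) = 0" unfolding g_def H2_Euler[OF q] q0 by simp
  have "g = 0" by (rule orthogonal_matrix_columns_eq_0[OF inv g1 g2 g3])
  thus ?thesis unfolding g_def t(2) grad_H2_scaleR[OF q] using t by simp
qed

section \<open>Domination by a sum of squares\<close>

definition sos :: "nat \<Rightarrow> (nat \<Rightarrow> real^3 \<Rightarrow> real) \<Rightarrow> real^3 \<Rightarrow> real" where
  "sos k qs v = (\<Sum>i<k. (qs i v)^2)"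

definition spans :: "(real^3 \<Rightarrow> real) set \<Rightarrow> nat \<Rightarrow> (nat \<Rightarrow> real^3 \<Rightarrow> real) \<Rightarrow> bool" where
  "spans J k qs \<longleftrightarrow> (\<forall>i<k. qs i \<in> J) \<and> (\<forall>q\<in>J. \<exists>a. \<forall>v. q v = (\<Sum>i<k. a i * qs i v))"

lemma sos_in_H4: assumes "\<forall>i<k. qs i \<in> H 2" shows "sos k qs \<in> H 4"
proof -
  have "(\<lambda>v. \<Sum>i\<in>{..<k}. (\<lambda>i v. qs i v * qs i v) i v) \<in> H 4"
  proof (rule H_sum)
    fix i assume "i \<in> {..<k}"
    hence "qs i \<in> H 2" using assms by auto
    from H_mult[OF this this] show "(\<lambda>v. qs i v * qs i v) \<in> H 4" by simp
  qed simp
  thus ?thesis unfolding sos_def[abs_def] by (simp add: power2_eq_square)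
qed

lemma sos_nonneg: "sos k qs v \<ge> 0" unfolding sos_def by (simp add: sum_nonneg)

lemma square_le_sos: assumes "\<forall>v. q v = (\<Sum>i<k. a i * qs i v)" shows "(q v)^2 \<le> (\<Sum>i<k. (a i)^2) * sos k qs v"
proof -
  have "q v = (\<Sum>i<k. a i * qs i v)" using assms by blast
  thus ?thesis unfolding sos_def by (simp only:) (rule Cauchy_Schwarz_ineq_sum)
qed

lemma spans_square_le_sos: assumes "spans J k qs" "q \<in> J" shows "\<exists>C\<ge>0. \<forall>v. (q v)^2 \<le> C * sos k qs v"
proof -
  obtain a where "\<forall>v. q v = (\<Sum>i<k. a i * qs i v)" using assms unfolding spans_def by blast
  thus ?thesis using square_le_sos by (intro exI[of _ "\<Sum>i<k. (a i)^2"]) (auto simp: sum_nonneg)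
qed

lemma spans_sos_zero: assumes "spans J k qs" "sos k qs v = 0" "q \<in> J" shows "q v = 0"
proof -
  have "\<forall>i\<in>{..<k}. (qs i v)^2 = 0" using assms(2) unfolding sos_def
    by (subst sum_nonneg_eq_0_iff[symmetric]) auto
  moreover obtain a where "\<forall>v. q v = (\<Sum>i<k. a i * qs i v)" using assms unfolding spans_def by blast
  ultimately show ?thesis by simp
qed

lemma chart_domination_from_bounds:
  fixes h g f :: "real^3 \<Rightarrow> real" and W :: "real \<Rightarrow> real \<Rightarrow> real"
  assumes h: "h \<in> H 4" and f: "f \<in> H 4" and ch: "chart s A" and v: "proj_eq v s"
    and \<delta>: "\<delta> > 0" and c: "c > 0" and M: "M \<ge> 0" and G: "G \<ge> 0"
    and up: "\<forall>x y. \<bar>x\<bar> \<le> \<delta> \<longrightarrow> \<bar>y\<bar> \<le> \<delta> \<longrightarrow> \<bar>h (A *v vector [x, y, 1])\<bar> \<le> M * W x y"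
    and lo: "\<forall>x y. \<bar>x\<bar> \<le> \<delta> \<longrightarrow> \<bar>y\<bar> \<le> \<delta> \<longrightarrow> c * W x y \<le> g (A *v vector [x, y, 1])"
    and gf: "\<forall>w. g w \<le> G * f w"
  shows "\<exists>U C. open U \<and> v \<in> U \<and> (\<forall>w\<in>U. \<bar>h w\<bar> \<le> C * f w)"
proof -
  have bd: "\<forall>x y. \<bar>x\<bar> \<le> \<delta> \<longrightarrow> \<bar>y\<bar> \<le> \<delta> \<longrightarrow> \<bar>h (A *v vector [x, y, 1])\<bar> \<le> (M / c * G) * f (A *v vector [x, y, 1])"
  proof (intro allI impI)
    fix x y :: real assume xy: "\<bar>x\<bar> \<le> \<delta>" "\<bar>y\<bar> \<le> \<delta>"
    let ?P = "A *v vector [x, y, 1]"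
    have "\<bar>h ?P\<bar> \<le> M * W x y" using up xy by blast
    also have "\<dots> \<le> M * (g ?P / c)" using lo xy c M by (intro mult_left_mono) (auto simp: field_simps)
    also have "\<dots> \<le> M * (G * f ?P / c)" using gf c M by (intro mult_left_mono divide_right_mono) auto
    finally show "\<bar>h ?P\<bar> \<le> (M / c * G) * f ?P" by (simp add: algebra_simps)
  qed
  obtain t where t: "t \<noteq> 0" "A *v e 3 = t *\<^sub>R s" using chart_origin[OF ch] by auto
  obtain r where r: "r \<noteq> 0" "v = r *\<^sub>R s" using v unfolding proj_eq_def by auto
  have "v = (r / t) *\<^sub>R (A *v e 3)" and "r / t \<noteq> 0" using t r by simp_all
  thus ?thesis using chart_neighbourhood_domination[OF h f _ _ \<delta> bd] ch unfolding chart_def by metis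
qed

lemma spans_two_squares_le_sos:
  assumes sp: "spans J k qs" and "qa \<in> J" "qb \<in> J"
  shows "\<exists>G\<ge>0. \<forall>w. (qa w)^2 + (qb w)^2 \<le> G * sos k qs w"
proof -
  obtain Ca Cb where "Ca \<ge> 0" "\<forall>v. (qa v)^2 \<le> Ca * sos k qs v" "Cb \<ge> 0" "\<forall>v. (qb v)^2 \<le> Cb * sos k qs v"
    using spans_square_le_sos[OF sp] assms by metis
  thus ?thesis by (intro exI[of _ "Ca + Cb"]) (auto simp: distrib_right add_mono)
qed

lemma Ipt_local_domination:
  assumes JH: "J \<subseteq> H 2" and sp: "spans J k qs" and h: "h \<in> H 4" and o: "ord_ge2 4 s h"
    and zJ: "\<forall>q\<in>J. q s = 0" and dm: "dim {grad q s | q. q \<in> J} = 2" and v: "proj_eq v s"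
  shows "\<exists>U C. open U \<and> v \<in> U \<and> (\<forall>w\<in>U. \<bar>h w\<bar> \<le> C * sos k qs w)"
proof -
  obtain A d where ch: "chart s A" and rep: "local_rep 4 h A d" and z: "d 0 0 = 0" "d 1 0 = 0" "d 0 1 = 0"
    using o unfolding ord_ge2_def by blast
  obtain g1 g2 where g: "g1 \<in> {grad q s | q. q \<in> J}" "g2 \<in> {grad q s | q. q \<in> J}"
    and ind: "\<forall>\<mu> \<nu>. \<mu> *\<^sub>R g1 + \<nu> *\<^sub>R g2 = 0 \<longrightarrow> \<mu> = 0 \<and> \<nu> = 0"
    using dim_2_independent_pair[OF dm] by blast
  then obtain qa qb where qa: "qa \<in> J" "g1 = grad qa s" and qb: "qb \<in> J" "g2 = grad qb s" by blast
  obtain c \<delta> where c: "c > 0" "\<delta> > 0" and lo: "\<forall>x y. \<bar>x\<bar> \<le> \<delta> \<longrightarrow> \<bar>y\<bar> \<le> \<delta> \<longrightarrow>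
     c * (x^2 + y^2) \<le> (qa (A *v vector [x, y, 1]))^2 + (qb (A *v vector [x, y, 1]))^2"
    using sum_squares_lower_bound_point[of qa qb s A] qa qb JH ch zJ ind by blast
  obtain G where "G \<ge> 0" "\<forall>w. (qa w)^2 + (qb w)^2 \<le> G * sos k qs w"
    using spans_two_squares_le_sos[OF sp qa(1) qb(1)] by blast
  moreover have "\<forall>x y. \<bar>x\<bar> \<le> min \<delta> 1 \<longrightarrow> \<bar>y\<bar> \<le> min \<delta> 1 \<longrightarrow>
      \<bar>h (A *v vector [x, y, 1])\<bar> \<le> (\<Sum>i\<le>4. \<Sum>j\<le>4 - i. \<bar>d i j\<bar>) * (x^2 + y^2)"
    using Ipt_local_upper_bound[OF rep z] by simp
  moreover have "\<forall>x y. \<bar>x\<bar> \<le> min \<delta> 1 \<longrightarrow> \<bar>y\<bar> \<le> min \<delta> 1 \<longrightarrow>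
      c * (x^2 + y^2) \<le> (qa (A *v vector [x, y, 1]))^2 + (qb (A *v vector [x, y, 1]))^2"
    using lo by simp
  ultimately show ?thesis using c JH sp
    by (intro chart_domination_from_bounds[OF h _ ch v, where \<delta>="min \<delta> 1" and W="\<lambda>x y. x^2 + y^2"])
      (auto simp: sum_nonneg spans_def intro!: sos_in_H4)
qed

lemma Ipl_local_domination:
  assumes JH: "J \<subseteq> H 2" and sp: "spans J k qs" and h: "h \<in> H 4" and hI: "h \<in> Ipl p nv"
    and zJ: "\<forall>q\<in>J. q p = 0" and c3: "\<exists>q\<in>J. grad q p \<noteq> 0"
    and FJ: "\<forall>q\<in>J. (\<lambda>v. (q v)^2) \<in> Fpl p nv"
    and c4: "Zset (EJ J p) \<inter> {a. nv \<bullet> a = 0} = {a. a \<noteq> 0 \<and> proj_eq a p}"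
    and v: "proj_eq v p"
  shows "\<exists>U C. open U \<and> v \<in> U \<and> (\<forall>w\<in>U. \<bar>h w\<bar> \<le> C * sos k qs w)"
proof -
  obtain A d where chl: "chart_line p nv A" and rep: "local_rep 4 h A d" and
    z: "d 0 0 = 0" "d 1 0 = 0" "d 0 1 = 0" "d 2 0 = 0" "d 1 1 = 0" "d 3 0 = 0"
    using hI unfolding Ipl_def by blast
  have ch: "chart p A" using chl by (rule chart_line_chart)
  have nvE1: "nv \<bullet> (A *v e 1) = 0" using chart_line_normal[OF chl] by (auto simp: axis_def)
  obtain qa where qa: "qa \<in> J" "grad qa p \<noteq> 0" using c3 by blast
  have ga1: "grad qa p \<bullet> (A *v e 1) = 0"
    using grad_orthogonal_line[of qa p nv] qa JH zJ FJ nvE1 by blast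
  have "A *v e 1 \<notin> Zset (EJ J p)"
    using c4 nvE1 chart_e1_not_proj_eq[OF ch] by blast
  moreover have "A *v e 1 \<noteq> 0"
    using invertible_matrix_vector_eq_0[of A "e 1"] ch unfolding chart_def by (auto simp: axis_eq_0_iff)
  ultimately obtain qb where qb: "qb \<in> J" "ord_ge2 2 p qb" "qb (A *v e 1) \<noteq> 0"
    unfolding Zset_def EJ_def by blast
  have gb0: "grad qb p = 0" using grad_ord_ge2_eq_0 qb JH by blast
  obtain c \<delta> where c: "c > 0" "\<delta> > 0" and lo: "\<forall>x y. \<bar>x\<bar> \<le> \<delta> \<longrightarrow> \<bar>y\<bar> \<le> \<delta> \<longrightarrow>
     c * (y^2 + x^4) \<le> (qa (A *v vector [x, y, 1]))^2 + (qb (A *v vector [x, y, 1]))^2"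
    using sum_squares_lower_bound_line_point[OF _ _ ch _ _ qa(2) ga1 gb0 qb(3)] qa qb JH zJ by blast
  obtain G where "G \<ge> 0" "\<forall>w. (qa w)^2 + (qb w)^2 \<le> G * sos k qs w"
    using spans_two_squares_le_sos[OF sp qa(1) qb(1)] by blast
  moreover have "\<forall>x y. \<bar>x\<bar> \<le> min \<delta> 1 \<longrightarrow> \<bar>y\<bar> \<le> min \<delta> 1 \<longrightarrow>
      \<bar>h (A *v vector [x, y, 1])\<bar> \<le> (\<Sum>i\<le>4. \<Sum>j\<le>4 - i. \<bar>d i j\<bar>) * (y^2 + x^4)"
    using Ipl_local_upper_bound[OF rep z] by simp
  moreover have "\<forall>x y. \<bar>x\<bar> \<le> min \<delta> 1 \<longrightarrow> \<bar>y\<bar> \<le> min \<delta> 1 \<longrightarrow>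
      c * (y^2 + x^4) \<le> (qa (A *v vector [x, y, 1]))^2 + (qb (A *v vector [x, y, 1]))^2"
    using lo by simp
  ultimately show ?thesis using c JH sp
    by (intro chart_domination_from_bounds[OF h _ ch v, where \<delta>="min \<delta> 1" and W="\<lambda>x y. y^2 + x^4"])
      (auto simp: sum_nonneg spans_def intro!: sos_in_H4)
qed

lemma local_rep_linear_combination: assumes "\<forall>i<K. local_rep k (gs i) A (ds i)"
  shows "local_rep k (\<lambda>v. \<Sum>i<K. c i * gs i v) A (\<lambda>a b. \<Sum>i<K. c i * ds i a b)"
  unfolding local_rep_def
proof (intro allI)
  fix x y :: real
  have "(\<Sum>i<K. c i * gs i (A *v vector [x, y, 1])) = (\<Sum>i<K. c i * (\<Sum>a\<le>k. \<Sum>b\<le>k - a. ds i a b * x^a * y^b))"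
    using assms unfolding local_rep_def by simp
  also have "\<dots> = (\<Sum>a\<le>k. \<Sum>b\<le>k - a. (\<Sum>i<K. c i * ds i a b) * x^a * y^b)"
    by (simp add: sum_distrib_left sum_distrib_right mult.assoc sum.swap[of _ "{..<K}"])
  finally show "(\<Sum>i<K. c i * gs i (A *v vector [x, y, 1])) = (\<Sum>a\<le>k. \<Sum>b\<le>k - a. (\<Sum>i<K. c i * ds i a b) * x^a * y^b)" .
qed

text \<open>Evaluation at six points embeds \<open>H 2\<close> into a finite-dimensional space, where \<open>J\<close>
  gets a finite spanning family.\<close>

definition quad_values :: "(real^3 \<Rightarrow> real) \<Rightarrow> (real^3) \<times> (real^3)" where
  "quad_values q = (vector [q (e 1), q (e 2), q (e 3)], vector [q (e 1 + e 2), q (e 1 + e 3), q (e 2 + e 3)])"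

lemma quad_values_inj: assumes "q \<in> H 2" "q' \<in> H 2" "quad_values q = quad_values q'" shows "q = q'"
proof -
  obtain c where c: "q = monoms 2 c" using assms(1) by (auto simp: H_def)
  obtain d where d: "q' = monoms 2 d" using assms(2) by (auto simp: H_def)
  have v: "q (e 1) = q' (e 1)" "q (e 2) = q' (e 2)" "q (e 3) = q' (e 3)"
     "q (e 1 + e 2) = q' (e 1 + e 2)" "q (e 1 + e 3) = q' (e 1 + e 3)" "q (e 2 + e 3) = q' (e 2 + e 3)"
    using assms(3) unfolding quad_values_def by (auto simp: vec_eq_iff forall_3)
  hence "c 2 0 = d 2 0 \<and> c 0 2 = d 0 2 \<and> c 0 0 = d 0 0 \<and> c 1 1 = d 1 1 \<and> c 1 0 = d 1 0 \<and> c 0 1 = d 0 1"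
    unfolding c d monoms_2_expand by (simp add: axis_def)
  thus ?thesis unfolding c d by (intro ext) (simp add: monoms_2_expand)
qed

lemma fsubspace_sum: fixes K :: nat assumes "fsubspace J" "\<forall>i<K. gs i \<in> J" shows "(\<lambda>v. \<Sum>i<K. a i * gs i v) \<in> J"
  using assms(2)
proof (induction K)
  case 0 thus ?case using assms(1) unfolding fsubspace_def by simp
next
  case (Suc K)
  hence IH: "(\<lambda>v. \<Sum>i<K. a i * gs i v) \<in> J" by simp
  have "(\<lambda>v. a K * gs K v) \<in> J" using Suc.prems assms(1) unfolding fsubspace_def by simp
  moreover have add: "\<forall>f\<in>J. \<forall>g\<in>J. (\<lambda>v. f v + g v) \<in> J" using assms(1) unfolding fsubspace_def by blast
  ultimately have "(\<lambda>v. (\<Sum>i<K. a i * gs i v) + a K * gs K v) \<in> J" using add[rule_format, OF IH] by simp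
  thus ?case by simp
qed

lemma quad_values_sum: fixes K :: nat shows "quad_values (\<lambda>v. \<Sum>i<K. a i * gs i v) = (\<Sum>i<K. a i *\<^sub>R quad_values (gs i))"
proof -
  have "fst (quad_values (\<lambda>v. \<Sum>i<K. a i * gs i v)) = (\<Sum>i<K. a i *\<^sub>R fst (quad_values (gs i)))"
    unfolding quad_values_def by (simp add: vec_eq_iff forall_3 sum_component)
  moreover have "snd (quad_values (\<lambda>v. \<Sum>i<K. a i * gs i v)) = (\<Sum>i<K. a i *\<^sub>R snd (quad_values (gs i)))"
    unfolding quad_values_def by (simp add: vec_eq_iff forall_3 sum_component)
  ultimately show ?thesis by (simp add: prod_eq_iff fst_sum snd_sum)
qed

lemma spanning_family_exists: assumes sub: "fsubspace J" and JH: "J \<subseteq> H 2" shows "\<exists>k qs. spans J k qs"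
proof -
  define V where "V = quad_values ` J"
  obtain B where B: "B \<subseteq> V" "independent B" "V \<subseteq> span B" using basis_exists[of V] by metis
  have fB: "finite B" using B(2) by (rule finiteI_independent)
  obtain \<beta> where bij: "bij_betw \<beta> {0..<card B} B" using ex_bij_betw_nat_finite[OF fB] by blast
  have "\<forall>b\<in>B. \<exists>q\<in>J. quad_values q = b" using B(1) unfolding V_def by blast
  then obtain r where r: "\<And>b. b \<in> B \<Longrightarrow> r b \<in> J \<and> quad_values (r b) = b" by metis
  define k where "k = card B"
  define qs where "qs = (\<lambda>i. r (\<beta> i))"
  have bi: "\<beta> i \<in> B" if "i < k" for i using bij that unfolding k_def bij_betw_def by auto
  have qsJ: "\<forall>i<k. qs i \<in> J" using r bi unfolding qs_def by blast
  have "\<forall>q\<in>J. \<exists>a. \<forall>v. q v = (\<Sum>i<k. a i * qs i v)"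
  proof
    fix q assume q: "q \<in> J"
    have "quad_values q \<in> span B" using B(3) q unfolding V_def by blast
    then obtain u where u: "quad_values q = (\<Sum>b\<in>B. u b *\<^sub>R b)" using span_finite[OF fB] by auto
    define a where "a = (\<lambda>i. u (\<beta> i))"
    define q' where "q' = (\<lambda>v. \<Sum>i<k. a i * qs i v)"
    have q'J: "q' \<in> J" unfolding q'_def by (rule fsubspace_sum[OF sub qsJ])
    have "quad_values q' = (\<Sum>i<k. a i *\<^sub>R quad_values (qs i))" unfolding q'_def by (rule quad_values_sum)
    also have "\<dots> = (\<Sum>i\<in>{0..<card B}. u (\<beta> i) *\<^sub>R \<beta> i)"
      unfolding a_def qs_def k_def using r bi unfolding k_def
      by (intro sum.cong) (auto simp: atLeast0LessThan)
    also have "\<dots> = (\<Sum>b\<in>B. u b *\<^sub>R b)"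
      by (rule sum.reindex_bij_betw[OF bij, of "\<lambda>b. u b *\<^sub>R b"])
    finally have "quad_values q' = quad_values q" using u by simp
    hence "q = q'" using quad_values_inj[of q q'] q q'J JH by auto
    thus "\<exists>a. \<forall>v. q v = (\<Sum>i<k. a i * qs i v)" unfolding q'_def by auto
  qed
  thus ?thesis using qsJ unfolding spans_def by blast
qed

section \<open>The inclusion of the span of F_S in I_S\<close>

lemma local_rep_choice:
  assumes "\<forall>i<K. gs i \<in> H 4" shows "\<exists>ds. \<forall>i<K. local_rep 4 (gs i) A (ds i)"
proof -
  have "\<forall>i. \<exists>d. i < K \<longrightarrow> local_rep 4 (gs i) A d" using assms local_rep_exists by blast
  thus ?thesis by metis
qed

lemma Ipt_linear_combination:
  fixes K :: nat
  assumes s: "s \<noteq> 0" and gs: "\<forall>i<K. gs i \<in> Fpt s"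
  shows "(\<lambda>v. \<Sum>i<K. c i * gs i v) \<in> Ipt s"
proof -
  have gsH: "\<forall>i<K. gs i \<in> H 4" and gsN: "\<forall>i<K. \<forall>v. gs i v \<ge> 0" and gs0: "\<forall>i<K. gs i s = 0"
    using gs unfolding Fpt_def P34_def by auto
  obtain A where A: "chart s A" using chart_exists[OF s] by blast
  obtain ds where ds: "\<forall>i<K. local_rep 4 (gs i) A (ds i)" using local_rep_choice[OF gsH] by blast
  have z: "ds i 0 0 = 0 \<and> ds i 1 0 = 0 \<and> ds i 0 1 = 0" if "i < K" for i
    using nonneg_local_rep_order2[of "gs i" s A "ds i"] gsH gsN gs0 A ds that by auto
  have "(\<lambda>v. \<Sum>i<K. c i * gs i v) \<in> H 4" by (intro H_sum H_scale) (use gsH in auto)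
  moreover have "local_rep 4 (\<lambda>v. \<Sum>i<K. c i * gs i v) A (\<lambda>a b. \<Sum>i<K. c i * ds i a b)"
    by (rule local_rep_linear_combination[OF ds])
  moreover have "(\<lambda>a b. \<Sum>i<K. c i * ds i a b) 0 0 = 0 \<and> (\<lambda>a b. \<Sum>i<K. c i * ds i a b) 1 0 = 0
      \<and> (\<lambda>a b. \<Sum>i<K. c i * ds i a b) 0 1 = 0"
    using z by simp
  ultimately show ?thesis unfolding Ipt_def ord_ge2_def using A by blast
qed

lemma Ipl_linear_combination:
  fixes K :: nat
  assumes p: "p \<noteq> 0" and nv: "nv \<noteq> 0" "nv \<bullet> p = 0" and gs: "\<forall>i<K. gs i \<in> Fpl p nv"
  shows "(\<lambda>v. \<Sum>i<K. c i * gs i v) \<in> Ipl p nv"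
proof -
  have gsH: "\<forall>i<K. gs i \<in> H 4" using gs unfolding Fpl_def P34_def by auto
  obtain A where A: "chart_line p nv A" using chart_line_exists[OF p nv] by blast
  obtain ds where ds: "\<forall>i<K. local_rep 4 (gs i) A (ds i)" using local_rep_choice[OF gsH] by blast
  have z: "ds i 0 0 = 0 \<and> ds i 1 0 = 0 \<and> ds i 0 1 = 0 \<and> ds i 2 0 = 0 \<and> ds i 1 1 = 0 \<and> ds i 3 0 = 0"
    if i: "i < K" for i
  proof -
    obtain B c where "gs i \<in> P34" "gs i p = 0" "chart_line p nv B" "local_rep 4 (gs i) B c" "c 2 0 = 0"
      using gs i unfolding Fpl_def by blast
    thus ?thesis using Fpl_local_rep_coeffs[OF _ _ _ _ _ _ A] ds i unfolding P34_def by blast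
  qed
  have "(\<lambda>v. \<Sum>i<K. c i * gs i v) \<in> H 4" by (intro H_sum H_scale) (use gsH in auto)
  moreover have "local_rep 4 (\<lambda>v. \<Sum>i<K. c i * gs i v) A (\<lambda>a b. \<Sum>i<K. c i * ds i a b)"
    by (rule local_rep_linear_combination[OF ds])
  moreover
  let ?cs = "\<lambda>a b. \<Sum>i<K. c i * ds i a b"
  have "?cs 0 0 = 0 \<and> ?cs 1 0 = 0 \<and> ?cs 0 1 = 0 \<and> ?cs 2 0 = 0 \<and> ?cs 1 1 = 0 \<and> ?cs 3 0 = 0"
    using z by simp
  ultimately show ?thesis unfolding Ipl_def using A by blast
qed

lemma span_FS_subset_IS:
  assumes config: "configuration n s m p l"
  shows "fspan (FS n s m p l) \<subseteq> IS n s m p l"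
proof
  fix g assume "g \<in> fspan (FS n s m p l)"
  then obtain K c gs where gs: "\<forall>i<(K::nat). gs i \<in> FS n s m p l" and g: "g = (\<lambda>v. \<Sum>i<K. c i * gs i v)"
    unfolding fspan_def by blast
  have "g \<in> H 4" unfolding g by (intro H_sum H_scale) (use gs in \<open>auto simp: FS_def P34_def\<close>)
  moreover have "g \<in> Ipt (s i)" if "i < n" for i
    unfolding g using config gs that
    by (intro Ipt_linear_combination) (auto simp: configuration_def FS_def)
  moreover have "g \<in> Ipl (p j) (l j)" if "j < m" for j
    unfolding g using config gs that
    by (intro Ipl_linear_combination) (auto simp: configuration_def FS_def)
  ultimately show "g \<in> IS n s m p l" unfolding IS_def by blast
qed

lemma fspan_superset: "S \<subseteq> fspan S"
proof
  fix f assume "f \<in> S"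
  thus "f \<in> fspan S" unfolding fspan_def
    by (intro CollectI exI[of _ "1::nat"] exI[of _ "\<lambda>_. 1"] exI[of _ "\<lambda>_. f"]) auto
qed

lemma fspan_diff:
  assumes "f \<in> S" "g \<in> S" shows "(\<lambda>v. f v - t * g v) \<in> fspan S"
proof -
  have "(\<lambda>v. f v - t * g v) = (\<lambda>v. \<Sum>i<(2::nat). (if i = 0 then 1 else - t) * (if i = 0 then f else g) v)"
    by (simp add: numeral_2_eq_2)
  thus ?thesis unfolding fspan_def using assms
    by (intro CollectI exI[of _ "2::nat"] exI[of _ "\<lambda>i. if i = 0 then 1 else - t"]
        exI[of _ "\<lambda>i. if i = 0 then f else g"]) auto
qed

section \<open>Dominated forms and the face F_S\<close>

lemma Fpl_dominated:
  assumes f: "f \<in> Fpl p nv" and g: "g \<in> P34" and dom: "\<forall>v. g v \<le> C * f v"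
  shows "g \<in> Fpl p nv"
proof -
  obtain B c where fp: "f p = 0" and B: "chart_line p nv B" and repf: "local_rep 4 f B c" and c20: "c 2 0 = 0"
    and fP: "f \<in> P34" using f unfolding Fpl_def by blast
  have fH: "f \<in> H 4" and fN: "\<forall>v. f v \<ge> 0" and gH: "g \<in> H 4" and gN: "\<forall>v. g v \<ge> 0"
    using fP g unfolding P34_def by auto
  have gp: "g p = 0" using dom[rule_format, of p] gN fp by (simp add: order_antisym)
  obtain d where d: "local_rep 4 g B d" using local_rep_exists[OF gH] by blast
  have z: "d 0 0 = 0" "d 1 0 = 0" using nonneg_local_rep_order2[OF gH gN gp chart_line_chart[OF B] d] by auto
  have Pf: "f (B *v vector [x, 0, 1]) = c 4 0 * x^4" for x
    using Fpl_line_restriction[OF fH fN fp B repf c20] by blast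
  have Pg: "g (B *v vector [x, 0, 1]) = x^2 * (d 2 0 + d 3 0 * x + d 4 0 * x^2)" for x
    unfolding local_rep_4_expand[OF d] z by (simp add: algebra_simps power2_eq_square power3_eq_cube power4_eq_xxxx)
  have upper: "(\<lambda>x. C * c 4 0 * x^2 - (d 2 0 + d 3 0 * x + d 4 0 * x^2)) 0 \<ge> 0"
  proof (rule isCont_nonneg_punctured[where \<delta>=1])
    fix x :: real assume x: "x \<noteq> 0"
    have "x^2 * (d 2 0 + d 3 0 * x + d 4 0 * x^2) \<le> x^2 * (C * c 4 0 * x^2)"
      using dom[rule_format, of "B *v vector [x, 0, 1]"] unfolding Pg Pf by (simp add: algebra_simps power4_eq_xxxx power2_eq_square)
    thus "(\<lambda>x. C * c 4 0 * x^2 - (d 2 0 + d 3 0 * x + d 4 0 * x^2)) x \<ge> 0"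
      using x by simp
  qed (auto intro: continuous_intros)
  have lower: "(\<lambda>x. d 2 0 + d 3 0 * x + d 4 0 * x^2) 0 \<ge> 0"
  proof (rule isCont_nonneg_punctured[where \<delta>=1])
    fix x :: real assume x: "x \<noteq> 0"
    have "0 \<le> x^2 * (d 2 0 + d 3 0 * x + d 4 0 * x^2)" using gN Pg by metis
    thus "(\<lambda>x. d 2 0 + d 3 0 * x + d 4 0 * x^2) x \<ge> 0" using x by (simp add: zero_le_mult_iff)
  qed (auto intro: continuous_intros)
  have "d 2 0 = 0" using upper lower by simp
  thus ?thesis unfolding Fpl_def using g gp B d by blast
qed

lemma FS_dominated:
  assumes f: "f \<in> FS n s m p l" and g: "g \<in> P34" and dom: "\<forall>v. g v \<le> C * f v"
  shows "g \<in> FS n s m p l"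
proof -
  have "g (s i) = 0" if "i < n" for i
    using f that dom[rule_format, of "s i"] g unfolding FS_def Fpt_def P34_def by (force intro: order_antisym)
  moreover have "g \<in> Fpl (p j) (l j)" if "j < m" for j
    using Fpl_dominated[OF _ g dom] f that unfolding FS_def by blast
  ultimately show ?thesis using g unfolding FS_def Fpt_def by blast
qed

lemma Fof_dominated:
  assumes "g \<in> Fof f" shows "\<exists>C. \<forall>v. g v \<le> C * f v"
proof -
  obtain \<epsilon> where \<epsilon>: "\<epsilon> > 0" and "(\<lambda>v. f v - \<epsilon> * g v) \<in> P34" using assms unfolding Fof_def by blast
  hence "\<forall>v. \<epsilon> * g v \<le> f v" unfolding P34_def by auto
  hence "\<forall>v. g v \<le> (1 / \<epsilon>) * f v" using \<epsilon> by (simp add: field_simps mult.commute)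
  thus ?thesis by blast
qed

lemma Fof_if_dominated:
  assumes f: "f \<in> P34" and g: "g \<in> P34" and dom: "\<forall>v. g v \<le> C * f v"
  shows "g \<in> Fof f"
proof -
  define \<epsilon> where "\<epsilon> = 1 / (max C 0 + 1)"
  have \<epsilon>: "\<epsilon> > 0" unfolding \<epsilon>_def by (simp add: add_nonneg_pos)
  have fN: "\<forall>v. f v \<ge> 0" and fH: "f \<in> H 4" and gH: "g \<in> H 4" using f g unfolding P34_def by auto
  have "\<epsilon> * g v \<le> f v" for v
  proof -
    have "g v \<le> (max C 0 + 1) * f v"
      using dom[rule_format, of v] fN[rule_format, of v] by (smt (verit) mult_right_mono max.cobounded1)
    hence "\<epsilon> * g v \<le> \<epsilon> * ((max C 0 + 1) * f v)" using \<epsilon> by (intro mult_left_mono) auto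
    also have "\<dots> = f v" unfolding \<epsilon>_def by (simp add: add_nonneg_pos field_simps)
    finally show ?thesis .
  qed
  moreover have "(\<lambda>v. f v - \<epsilon> * g v) \<in> H 4" using H_add[OF fH H_scale[OF gH, of "-\<epsilon>"]] by simp
  ultimately have "(\<lambda>v. f v - \<epsilon> * g v) \<in> P34" unfolding P34_def by auto
  thus ?thesis unfolding Fof_def using g \<epsilon> by blast
qed

lemma Ipl_nonneg_in_Fpl:
  assumes f: "f \<in> Ipl p nv" and fP: "f \<in> P34" shows "f \<in> Fpl p nv"
proof -
  obtain A d where A: "chart_line p nv A" "local_rep 4 f A d" and "d 0 0 = 0" "d 2 0 = 0"
    using f unfolding Ipl_def by blast
  moreover have "f p = 0"
    using local_rep_origin_zero[OF _ chart_line_chart[OF A(1)] A(2)] fP \<open>d 0 0 = 0\<close> unfolding P34_def by blast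
  ultimately show ?thesis using fP unfolding Fpl_def by blast
qed

lemma FS_sum:
  fixes K :: nat
  assumes config: "configuration n s m p l" and gs: "\<forall>i<K. gs i \<in> FS n s m p l"
  shows "(\<lambda>v. \<Sum>i<K. gs i v) \<in> FS n s m p l"
proof -
  let ?g = "\<lambda>v. \<Sum>i<K. 1 * gs i v"
  have "?g \<in> P34" using gs unfolding FS_def P34_def by (auto intro!: H_sum sum_nonneg)
  moreover have "?g (s i) = 0" if "i < n" for i
    using gs that unfolding FS_def Fpt_def by auto
  moreover have "?g \<in> Fpl (p j) (l j)" if "j < m" for j
    using config gs that \<open>?g \<in> P34\<close>
    by (intro Ipl_nonneg_in_Fpl Ipl_linear_combination) (auto simp: configuration_def FS_def)
  ultimately show ?thesis unfolding FS_def Fpt_def by simp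
qed

lemma proj_eq_refl: "a \<noteq> 0 \<Longrightarrow> proj_eq a a"
  unfolding proj_eq_def by (intro exI[of _ 1]) simp

context
  fixes n m :: nat and s p l :: "nat \<Rightarrow> real^3" and J :: "(real^3 \<Rightarrow> real) set"
  assumes config: "configuration n s m p l"
    and subsp: "fsubspace J"
    and JsubJS: "J \<subseteq> JF (FS n s m p l)"
    and c1: "Zset J = {a. a \<noteq> 0 \<and> ((\<exists>i<n. proj_eq a (s i)) \<or> (\<exists>j<m. proj_eq a (p j)))}"
    and c2: "\<forall>i<n. dim {grad q (s i) | q. q \<in> J} = 2"
    and c3: "\<forall>j<m. \<exists>q\<in>J. grad q (p j) \<noteq> 0"
    and c4: "\<forall>j<m. Zset (EJ J (p j)) \<inter> {a. l j \<bullet> a = 0} = {a. a \<noteq> 0 \<and> proj_eq a (p j)}"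
begin

lemma J_subset_H2: "J \<subseteq> H 2"
  using JsubJS unfolding JF_def by auto

lemma square_J_in_FS: "q \<in> J \<Longrightarrow> (\<lambda>v. (q v)^2) \<in> FS n s m p l"
  using JsubJS unfolding JF_def by auto

lemma J_vanish_s:
  assumes i: "i < n" and q: "q \<in> J" shows "q (s i) = 0"
proof -
  have "s i \<noteq> 0" using config i unfolding configuration_def by auto
  hence "s i \<in> Zset J" unfolding c1 using i proj_eq_refl by blast
  thus ?thesis using q unfolding Zset_def by blast
qed

lemma J_vanish_p:
  assumes j: "j < m" and q: "q \<in> J" shows "q (p j) = 0"
proof -
  have "p j \<noteq> 0" using config j unfolding configuration_def by auto
  hence "p j \<in> Zset J" unfolding c1 using j proj_eq_refl by blast
  thus ?thesis using q unfolding Zset_def by blast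
qed

lemma sos_in_FS: "\<forall>i<k. qs i \<in> J \<Longrightarrow> sos k qs \<in> FS n s m p l"
  unfolding sos_def[abs_def] using square_J_in_FS by (intro FS_sum[OF config]) auto

lemma IS_dominated_by_sos:
  assumes sp: "spans J k qs" and h: "h \<in> IS n s m p l"
  shows "\<exists>C. \<forall>v. \<bar>h v\<bar> \<le> C * sos k qs v"
proof -
  have hH: "h \<in> H 4" using h unfolding IS_def by auto
  have qsH: "\<forall>i<k. qs i \<in> H 2" using sp J_subset_H2 unfolding spans_def by auto
  show ?thesis
  proof (rule dominated_if_locally_dominated[OF hH sos_in_H4[OF qsH]])
    show "\<forall>v. sos k qs v \<ge> 0" using sos_nonneg by blast
    fix v assume v: "v \<noteq> 0" "sos k qs v = 0"
    have "v \<in> Zset J" unfolding Zset_def using v spans_sos_zero[OF sp] by blast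
    hence "(\<exists>i<n. proj_eq v (s i)) \<or> (\<exists>j<m. proj_eq v (p j))" unfolding c1 by blast
    thus "\<exists>U C. open U \<and> v \<in> U \<and> (\<forall>w\<in>U. \<bar>h w\<bar> \<le> C * sos k qs w)"
    proof
      assume "\<exists>i<n. proj_eq v (s i)"
      then obtain i where i: "i < n" "proj_eq v (s i)" by blast
      have "ord_ge2 4 (s i) h" using h i unfolding IS_def Ipt_def by auto
      thus ?thesis
        by (rule Ipt_local_domination[OF J_subset_H2 sp hH _ _ _ i(2)]) (use i J_vanish_s c2 in auto)
    next
      assume "\<exists>j<m. proj_eq v (p j)"
      then obtain j where j: "j < m" "proj_eq v (p j)" by blast
      have hI: "h \<in> Ipl (p j) (l j)" using h j unfolding IS_def by auto
      have FJ: "\<forall>q\<in>J. (\<lambda>v. (q v)^2) \<in> Fpl (p j) (l j)"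
        using square_J_in_FS j unfolding FS_def by blast
      show ?thesis
        by (rule Ipl_local_domination[OF J_subset_H2 sp hH hI _ _ FJ _ j(2)]) (use j J_vanish_p c3 c4 in auto)
    qed
  qed
qed

lemma IS_subset_span_FS: "IS n s m p l \<subseteq> fspan (FS n s m p l)"
proof
  fix h assume h: "h \<in> IS n s m p l"
  obtain k qs where sp: "spans J k qs" using spanning_family_exists[OF subsp J_subset_H2] by blast
  define f where "f = sos k qs"
  have fFS: "f \<in> FS n s m p l" unfolding f_def using sp sos_in_FS unfolding spans_def by blast
  have fN: "\<forall>v. f v \<ge> 0" and fH: "f \<in> H 4" using fFS unfolding f_def FS_def P34_def by auto
  obtain C where C: "\<forall>v. \<bar>h v\<bar> \<le> C * f v" using IS_dominated_by_sos[OF sp h] unfolding f_def by blast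
  define g where "g = (\<lambda>v. h v + max C 0 * f v)"
  have "0 \<le> g v \<and> g v \<le> (2 * max C 0) * f v" for v
  proof -
    have "C * f v \<le> max C 0 * f v" using fN by (intro mult_right_mono) auto
    moreover have "(2 * max C 0) * f v = 2 * (max C 0 * f v)" by simp
    ultimately show ?thesis using C[rule_format, of v] unfolding g_def abs_le_iff by linarith
  qed
  moreover have "g \<in> H 4" using h unfolding g_def IS_def by (intro H_add H_scale fH) auto
  ultimately have "g \<in> FS n s m p l" using FS_dominated[OF fFS] unfolding P34_def by blast
  moreover have "h = (\<lambda>v. g v - max C 0 * f v)" unfolding g_def by simp
  ultimately show "h \<in> fspan (FS n s m p l)" using fspan_diff[OF _ fFS] by metis
qed

lemma sos_inner_form:
  assumes fb: "fbasis J k qs" shows "inner_form (\<lambda>v. \<Sum>i<k. (qs i v)^2) (FS n s m p l)"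
proof -
  have sp: "spans J k qs" using fb unfolding fbasis_def spans_def by auto
  have fFS: "sos k qs \<in> FS n s m p l" using sp sos_in_FS unfolding spans_def by blast
  hence fP: "sos k qs \<in> P34" unfolding FS_def by blast
  have "Fof (sos k qs) \<subseteq> FS n s m p l"
  proof
    fix g assume g: "g \<in> Fof (sos k qs)"
    then obtain C where "\<forall>v. g v \<le> C * sos k qs v" using Fof_dominated by blast
    thus "g \<in> FS n s m p l" using FS_dominated[OF fFS] g unfolding Fof_def by blast
  qed
  moreover have "FS n s m p l \<subseteq> Fof (sos k qs)"
  proof
    fix g assume g: "g \<in> FS n s m p l"
    hence "g \<in> IS n s m p l" using span_FS_subset_IS[OF config] fspan_superset by blast
    then obtain C where "\<forall>v. \<bar>g v\<bar> \<le> C * sos k qs v" using IS_dominated_by_sos[OF sp] by blast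
    hence "\<forall>v. g v \<le> C * sos k qs v" by (meson abs_ge_self order_trans)
    thus "g \<in> Fof (sos k qs)" using Fof_if_dominated[OF fP] g unfolding FS_def by blast
  qed
  moreover have "(\<lambda>v. \<Sum>i<k. (qs i v)^2) = sos k qs" unfolding sos_def ..
  ultimately show ?thesis unfolding inner_form_def using fP by auto
qed

end

theorem mainTheorem5:
  fixes n m :: nat and s p l :: "nat \<Rightarrow> real^3" and J :: "(real^3 \<Rightarrow> real) set"
  assumes config: "configuration n s m p l"
    and subsp: "fsubspace J"
    and JsubJS: "J \<subseteq> JF (FS n s m p l)"
    and c1: "Zset J = {a. a \<noteq> 0 \<and> ((\<exists>i<n. proj_eq a (s i)) \<or> (\<exists>j<m. proj_eq a (p j)))}"
    and c2: "\<forall>i<n. dim {grad q (s i) | q. q \<in> J} = 2"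
    and c3: "\<forall>j<m. \<exists>q\<in>J. grad q (p j) \<noteq> 0"
    and c4: "\<forall>j<m. Zset (EJ J (p j)) \<inter> {a. l j \<bullet> a = 0} = {a. a \<noteq> 0 \<and> proj_eq a (p j)}"
  shows "fspan (FS n s m p l) = IS n s m p l
    \<and> (\<forall>k qs. fbasis J k qs \<longrightarrow> inner_form (\<lambda>v. \<Sum>i<k. (qs i v)^2) (FS n s m p l))"
proof (intro conjI allI impI)
  show "fspan (FS n s m p l) = IS n s m p l"
    using span_FS_subset_IS[OF config] IS_subset_span_FS[OF assms] by (rule subset_antisym)
  fix k qs assume "fbasis J k qs"
  thus "inner_form (\<lambda>v. \<Sum>i<k. (qs i v)^2) (FS n s m p l)" by (rule sos_inner_form[OF assms])
qed

end
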